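(* Any sentence provable in $\mathit{HT}_{\#}$ can be derived in $\mathit{HT}_{\#2}^{\omega}$ from the axioms $D_0$.
   Context: $\sigma_2$ is the two-sorted signature (general, integer) with numerals, other precomputed terms (totally ordered, numerals contiguous), integer arithmetic, predicates $p/n$, comparisons, and predicate constants $\mathit{Atleast}^{\mathbf{X};\mathbf{V}}_F$, $\mathit{Atmost}^{\mathbf{X};\mathbf{V}}_F$, $\mathit{Start}^{\mathbf{X};\mathbf{V}}_F$. $D_0$: $\forall\mathbf{X}\mathbf{V}N(N\leq\overline 0\to\mathit{Start}^{\mathbf{X};\mathbf{V}}_F(\mathbf{X},\mathbf{V},N))$, $\forall\mathbf{X}\mathbf{V}(\mathit{Start}^{\mathbf{X};\mathbf{V}}_F(\mathbf{X},\mathbf{V},\overline 1)\leftrightarrow F)$, $\forall\mathbf{X}\mathbf{V}N(N>\overline 0\to(\mathit{Start}^{\mathbf{X};\mathbf{V}}_F(\mathbf{X},\mathbf{V},N+\overline 1)\leftrightarrow F\land\exists\mathbf{U}(\mathbf{X}<\mathbf{U}\land\mathit{Start}^{\mathbf{X};\mathbf{V}}_F(\mathbf{U},\mathbf{V},N))))$ ($<$ lexicographic). $D_1$: universal closures of $\mathit{Atleast}^{\mathbf{X};\mathbf{V}}_F(\mathbf{V},Y)\leftrightarrow\exists\mathbf{X}N(\mathit{Start}^{\mathbf{X};\mathbf{V}}_F(\mathbf{X},\mathbf{V},N)\land N\geq Y)$ and $\mathit{Atmost}^{\mathbf{X};\mathbf{V}}_F(\mathbf{V},Y)\leftrightarrow\forall\mathbf{X}N(\mathit{Start}^{\mathbf{X};\mathbf{V}}_F(\mathbf{X},\mathbf{V},N)\to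 N\leq Y)$. $\mathit{HT}_{\#}$ is first-order intuitionistic logic over $\sigma_2$ plus $F\lor(F\to G)\lor\neg G$, $\exists X(F\to\forall XF)$, Std (sentences without $p/n$ and without Atleast/Atmost/Start true in the standard interpretation), Ind (induction over nonnegative integers), $D_0$, $D_1$. $\mathit{HT}_{\#2}^{\omega}$ is intuitionistic natural deduction over $\sigma_2$ extended by $F\lor(F\to G)\lor\neg G$, $\exists X(F\to\forall XF)$, Std, Defs (the sentences $\forall\mathbf{V}(\mathit{Atleast}^{\mathbf{X};\mathbf{V}}_F(\mathbf{V},r)\leftrightarrow\exists_{\geq r}\mathbf{X}F)$, $\forall\mathbf{V}(\mathit{Atmost}^{\mathbf{X};\mathbf{V}}_F(\mathbf{V},r)\leftrightarrow\exists_{\leq r}\mathbf{X}F)$ for each precomputed term $r$, with $\exists_{\geq r}$/$\exists_{\leq r}$ the first-order "at least/at most $r$ values" expansions) and the $\omega$-rules (infer $\Gamma\Rightarrow\forall XF$ from $\Gamma\Rightarrow F^X_t$ for all precomputed $t$; infer $\Gamma\Rightarrow\forall NF$ from $\Gamma\Rightarrow F^N_{\overline n}$ for all integers $n$). *)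

theory Defs
  imports Main
begin

datatype sort = General | Integer

datatype var = Vr sort nat

fun sortof :: "var \<Rightarrow> sort" where
  "sortof (Vr s n) = s"

text \<open>Precomputed terms: inf, numerals, symbolic constants, sup.
  Total order: Inf < numerals (by value) < symbolic constants (by index) < Sup.\<close>
datatype pc = Inf | Num int | Sym nat | Sup

fun pc_rank :: "pc \<Rightarrow> nat" where
  "pc_rank Inf = 0" | "pc_rank (Num n) = 1" | "pc_rank (Sym n) = 2" | "pc_rank Sup = 3"

fun pc_less :: "pc \<Rightarrow> pc \<Rightarrow> bool" where
  "pc_less (Num m) (Num n) = (m < n)"
| "pc_less (Sym m) (Sym n) = (m < n)"
| "pc_less a b = (pc_rank a < pc_rank b)"

datatype tm = Var var | Pc pc | Add tm tm | Sub tm tm | Mul tm tm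

datatype cmp = Eq | Ne | Lt | Gt | Le | Ge

datatype aggk = Atleast | Atmost | Start

text \<open>\<open>Agg k X V F ts\<close> is the predicate constant \<open>k^{X;V}_F\<close> applied to the
  argument tuple \<open>ts\<close>.\<close>
datatype fm =
    Bot
  | Pred string "tm list"
  | Cmp cmp tm tm
  | And fm fm
  | Or fm fm
  | Imp fm fm
  | Ex var fm
  | All var fm
  | Agg aggk "var list" "var list" fm "tm list"

definition Neg :: "fm \<Rightarrow> fm" where "Neg F = Imp F Bot"
definition Top :: fm where "Top = Imp Bot Bot"
definition Iff :: "fm \<Rightarrow> fm \<Rightarrow> fm" where "Iff F G = And (Imp F G) (Imp G F)"

definition AllL :: "var list \<Rightarrow> fm \<Rightarrow> fm" where "AllL xs F = foldr All xs F"
definition ExL :: "var list \<Rightarrow> fm \<Rightarrow> fm" where "ExL xs F = foldr Ex xs F"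
definition Conj :: "fm list \<Rightarrow> fm" where "Conj Fs = foldr And Fs Top"
definition Disj :: "fm list \<Rightarrow> fm" where "Disj Fs = foldr Or Fs Bot"

section \<open>Variables, substitution, well-formedness\<close>

fun fvt :: "tm \<Rightarrow> var set" where
  "fvt (Var x) = {x}"
| "fvt (Pc p) = {}"
| "fvt (Add a b) = fvt a \<union> fvt b"
| "fvt (Sub a b) = fvt a \<union> fvt b"
| "fvt (Mul a b) = fvt a \<union> fvt b"

text \<open>Free variables; a predicate constant \<open>k^{X;V}_F\<close> is a symbol, so only its
  arguments contribute.\<close>
fun fv :: "fm \<Rightarrow> var set" where
  "fv Bot = {}"
| "fv (Pred p ts) = (\<Union>t\<in>set ts. fvt t)"
| "fv (Cmp c a b) = fvt a \<union> fvt b"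
| "fv (And F G) = fv F \<union> fv G"
| "fv (Or F G) = fv F \<union> fv G"
| "fv (Imp F G) = fv F \<union> fv G"
| "fv (Ex x F) = fv F - {x}"
| "fv (All x F) = fv F - {x}"
| "fv (Agg k X V F ts) = (\<Union>t\<in>set ts. fvt t)"

text \<open>All variables occurring (free or bound) in a formula, outside subscripts.\<close>
fun allvars :: "fm \<Rightarrow> var set" where
  "allvars Bot = {}"
| "allvars (Pred p ts) = (\<Union>t\<in>set ts. fvt t)"
| "allvars (Cmp c a b) = fvt a \<union> fvt b"
| "allvars (And F G) = allvars F \<union> allvars G"
| "allvars (Or F G) = allvars F \<union> allvars G"
| "allvars (Imp F G) = allvars F \<union> allvars G"
| "allvars (Ex x F) = insert x (allvars F)"
| "allvars (All x F) = insert x (allvars F)"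
| "allvars (Agg k X V F ts) = (\<Union>t\<in>set ts. fvt t)"

fun substt :: "var \<Rightarrow> tm \<Rightarrow> tm \<Rightarrow> tm" where
  "substt x t (Var y) = (if y = x then t else Var y)"
| "substt x t (Pc p) = Pc p"
| "substt x t (Add a b) = Add (substt x t a) (substt x t b)"
| "substt x t (Sub a b) = Sub (substt x t a) (substt x t b)"
| "substt x t (Mul a b) = Mul (substt x t a) (substt x t b)"

text \<open>\<open>subst x t F\<close> is \<open>F^x_t\<close> (replacing free occurrences; used only when
  \<open>t\<close> is free for \<open>x\<close> in \<open>F\<close>).\<close>
fun subst :: "var \<Rightarrow> tm \<Rightarrow> fm \<Rightarrow> fm" where
  "subst x t Bot = Bot"
| "subst x t (Pred p ts) = Pred p (map (substt x t) ts)"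
| "subst x t (Cmp c a b) = Cmp c (substt x t a) (substt x t b)"
| "subst x t (And F G) = And (subst x t F) (subst x t G)"
| "subst x t (Or F G) = Or (subst x t F) (subst x t G)"
| "subst x t (Imp F G) = Imp (subst x t F) (subst x t G)"
| "subst x t (Ex y F) = (if y = x then Ex y F else Ex y (subst x t F))"
| "subst x t (All y F) = (if y = x then All y F else All y (subst x t F))"
| "subst x t (Agg k X V F ts) = Agg k X V F (map (substt x t) ts)"

fun free_for :: "tm \<Rightarrow> var \<Rightarrow> fm \<Rightarrow> bool" where
  "free_for t x (And F G) = (free_for t x F \<and> free_for t x G)"
| "free_for t x (Or F G) = (free_for t x F \<and> free_for t x G)"
| "free_for t x (Imp F G) = (free_for t x F \<and> free_for t x G)"
| "free_for t x (Ex y F) = (x \<notin> fv (Ex y F) \<or> (y \<notin> fvt t \<and> free_for t x F))"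
| "free_for t x (All y F) = (x \<notin> fv (All y F) \<or> (y \<notin> fvt t \<and> free_for t x F))"
| "free_for t x _ = True"

definition rename :: "var list \<Rightarrow> var list \<Rightarrow> fm \<Rightarrow> fm" where
  "rename xs ys F = foldl (\<lambda>G (x, y). subst x (Var y) G) F (zip xs ys)"

fun int_tm :: "tm \<Rightarrow> bool" where
  "int_tm (Var x) = (sortof x = Integer)"
| "int_tm (Pc p) = (\<exists>n. p = Num n)"
| "int_tm (Add a b) = (int_tm a \<and> int_tm b)"
| "int_tm (Sub a b) = (int_tm a \<and> int_tm b)"
| "int_tm (Mul a b) = (int_tm a \<and> int_tm b)"

fun gen_tm :: "tm \<Rightarrow> bool" where
  "gen_tm (Var x) = True"
| "gen_tm (Pc p) = True"
| "gen_tm t = int_tm t"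

fun has_sort :: "tm \<Rightarrow> sort \<Rightarrow> bool" where
  "has_sort t General = gen_tm t"
| "has_sort t Integer = int_tm t"

fun arg_sorts :: "aggk \<Rightarrow> var list \<Rightarrow> var list \<Rightarrow> sort list" where
  "arg_sorts Start X V = map sortof (X @ V) @ [Integer]"
| "arg_sorts k X V = map sortof V @ [General]"

fun wf :: "fm \<Rightarrow> bool" where
  "wf Bot = True"
| "wf (Pred p ts) = (\<forall>t\<in>set ts. gen_tm t)"
| "wf (Cmp c a b) = (gen_tm a \<and> gen_tm b)"
| "wf (And F G) = (wf F \<and> wf G)"
| "wf (Or F G) = (wf F \<and> wf G)"
| "wf (Imp F G) = (wf F \<and> wf G)"
| "wf (Ex x F) = wf F"
| "wf (All x F) = wf F"
| "wf (Agg k X V F ts) = (distinct (X @ V) \<and> wf F \<and> fv F \<subseteq> set (X @ V)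
      \<and> list_all2 has_sort ts (arg_sorts k X V))"

definition agg_ok :: "var list \<Rightarrow> var list \<Rightarrow> fm \<Rightarrow> bool" where
  "agg_ok X V F = (distinct (X @ V) \<and> wf F \<and> fv F \<subseteq> set (X @ V))"

section \<open>Standard interpretation\<close>

fun ev :: "(var \<Rightarrow> pc) \<Rightarrow> tm \<Rightarrow> pc" where
  "ev e (Var x) = e x"
| "ev e (Pc p) = p"
| "ev e (Add a b) = (case (ev e a, ev e b) of (Num m, Num n) \<Rightarrow> Num (m + n) | _ \<Rightarrow> Inf)"
| "ev e (Sub a b) = (case (ev e a, ev e b) of (Num m, Num n) \<Rightarrow> Num (m - n) | _ \<Rightarrow> Inf)"
| "ev e (Mul a b) = (case (ev e a, ev e b) of (Num m, Num n) \<Rightarrow> Num (m * n) | _ \<Rightarrow> Inf)"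

fun cmp_sem :: "cmp \<Rightarrow> pc \<Rightarrow> pc \<Rightarrow> bool" where
  "cmp_sem Eq a b = (a = b)"
| "cmp_sem Ne a b = (a \<noteq> b)"
| "cmp_sem Lt a b = pc_less a b"
| "cmp_sem Gt a b = pc_less b a"
| "cmp_sem Le a b = (pc_less a b \<or> a = b)"
| "cmp_sem Ge a b = (pc_less b a \<or> a = b)"

fun dom_of :: "sort \<Rightarrow> pc set" where
  "dom_of General = UNIV"
| "dom_of Integer = range Num"

text \<open>Truth in the standard interpretation (used only for formulas without
  p/n and without predicate constants).\<close>
fun holds :: "(var \<Rightarrow> pc) \<Rightarrow> fm \<Rightarrow> bool" where
  "holds e Bot = False"
| "holds e (Pred p ts) = False"
| "holds e (Cmp c a b) = cmp_sem c (ev e a) (ev e b)"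
| "holds e (And F G) = (holds e F \<and> holds e G)"
| "holds e (Or F G) = (holds e F \<or> holds e G)"
| "holds e (Imp F G) = (holds e F \<longrightarrow> holds e G)"
| "holds e (Ex x F) = (\<exists>d\<in>dom_of (sortof x). holds (e(x := d)) F)"
| "holds e (All x F) = (\<forall>d\<in>dom_of (sortof x). holds (e(x := d)) F)"
| "holds e (Agg k X V F ts) = False"

fun arith_only :: "fm \<Rightarrow> bool" where
  "arith_only Bot = True"
| "arith_only (Pred p ts) = False"
| "arith_only (Cmp c a b) = True"
| "arith_only (And F G) = (arith_only F \<and> arith_only G)"
| "arith_only (Or F G) = (arith_only F \<and> arith_only G)"
| "arith_only (Imp F G) = (arith_only F \<and> arith_only G)"
| "arith_only (Ex x F) = arith_only F"
| "arith_only (All x F) = arith_only F"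
| "arith_only (Agg k X V F ts) = False"

section \<open>Axiom sets\<close>

definition HTax :: "fm set" where
  "HTax = {Or F (Or (Imp F G) (Neg G)) | F G. wf F \<and> wf G}
        \<union> {Ex x (Imp F (All x F)) | x F. wf F}"

definition Std :: "fm set" where
  "Std = {F. wf F \<and> fv F = {} \<and> arith_only F \<and> holds (\<lambda>_. Num 0) F}"

definition Ind :: "fm set" where
  "Ind = {Imp (And (subst N (Pc (Num 0)) F)
                   (All N (Imp (And (Cmp Ge (Var N) (Pc (Num 0))) F)
                               (subst N (Add (Var N) (Pc (Num 1))) F))))
              (All N (Imp (Cmp Ge (Var N) (Pc (Num 0))) F))
          | N F. sortof N = Integer \<and> wf F}"

fun lexless :: "var list \<Rightarrow> var list \<Rightarrow> fm" where
  "lexless (x # xs) (u # us) =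
     Or (Cmp Lt (Var x) (Var u)) (And (Cmp Eq (Var x) (Var u)) (lexless xs us))"
| "lexless _ _ = Bot"

definition StartA :: "var list \<Rightarrow> var list \<Rightarrow> fm \<Rightarrow> var list \<Rightarrow> tm \<Rightarrow> fm" where
  "StartA X V F Us n = Agg Start X V F (map Var Us @ map Var V @ [n])"

definition D0_ok :: "var list \<Rightarrow> var list \<Rightarrow> fm \<Rightarrow> var \<Rightarrow> var list \<Rightarrow> bool" where
  "D0_ok X V F N U = (agg_ok X V F \<and> sortof N = Integer \<and> N \<notin> set (X @ V)
     \<and> map sortof U = map sortof X \<and> distinct U \<and> set U \<inter> set (X @ V @ [N]) = {})"

definition D0 :: "fm set" where
  "D0 = {AllL (X @ V @ [N]) (Imp (Cmp Le (Var N) (Pc (Num 0))) (StartA X V F X (Var N)))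
          | X V F N U. D0_ok X V F N U}
      \<union> {AllL (X @ V) (Iff (StartA X V F X (Pc (Num 1))) F) | X V F N U. D0_ok X V F N U}
      \<union> {AllL (X @ V @ [N]) (Imp (Cmp Gt (Var N) (Pc (Num 0)))
            (Iff (StartA X V F X (Add (Var N) (Pc (Num 1))))
                 (And F (ExL U (And (lexless X U) (StartA X V F U (Var N)))))))
          | X V F N U. D0_ok X V F N U}"

definition D1_ok :: "var list \<Rightarrow> var list \<Rightarrow> fm \<Rightarrow> var \<Rightarrow> var \<Rightarrow> bool" where
  "D1_ok X V F Y N = (agg_ok X V F \<and> sortof Y = General \<and> Y \<notin> set (X @ V)
     \<and> sortof N = Integer \<and> N \<notin> set (X @ V @ [Y]))"

definition D1 :: "fm set" where
  "D1 = {AllL (V @ [Y]) (Iff (Agg Atleast X V F (map Var (V @ [Y])))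
            (ExL (X @ [N]) (And (StartA X V F X (Var N)) (Cmp Ge (Var N) (Var Y)))))
          | X V F Y N. D1_ok X V F Y N}
      \<union> {AllL (V @ [Y]) (Iff (Agg Atmost X V F (map Var (V @ [Y])))
            (AllL (X @ [N]) (Imp (StartA X V F X (Var N)) (Cmp Le (Var N) (Var Y)))))
          | X V F Y N. D1_ok X V F Y N}"

text \<open>Counting expansions \<open>\<exists>_{\<ge> r} X F\<close> and \<open>\<exists>_{\<le> r} X F\<close>, using a list \<open>Ys\<close>
  of fresh copies of the tuple \<open>X\<close>.\<close>
definition pairs :: "'a list \<Rightarrow> ('a \<times> 'a) list" where
  "pairs xs = [(xs ! i, xs ! j). i \<leftarrow> [0..<length xs], j \<leftarrow> [Suc i..<length xs]]"

definition tup_eq :: "var list \<Rightarrow> var list \<Rightarrow> fm" where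
  "tup_eq ys zs = Conj (map (\<lambda>(y, z). Cmp Eq (Var y) (Var z)) (zip ys zs))"

definition tup_ne :: "var list \<Rightarrow> var list \<Rightarrow> fm" where
  "tup_ne ys zs = Disj (map (\<lambda>(y, z). Cmp Ne (Var y) (Var z)) (zip ys zs))"

definition copies_ok :: "var list \<Rightarrow> var list \<Rightarrow> fm \<Rightarrow> var list list \<Rightarrow> nat \<Rightarrow> bool" where
  "copies_ok X V F Ys n = (length Ys = n \<and> (\<forall>Y\<in>set Ys. map sortof Y = map sortof X)
     \<and> distinct (concat Ys) \<and> set (concat Ys) \<inter> (set X \<union> set V \<union> allvars F) = {})"

fun cnt_ge :: "pc \<Rightarrow> nat" where
  "cnt_ge (Num n) = nat n" | "cnt_ge _ = 0"

fun cnt_le :: "pc \<Rightarrow> nat" where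
  "cnt_le (Num n) = nat (n + 1)" | "cnt_le _ = 0"

fun exists_ge :: "var list \<Rightarrow> fm \<Rightarrow> var list list \<Rightarrow> pc \<Rightarrow> fm" where
  "exists_ge X F Ys (Num n) =
     (if n \<le> 0 then Top
      else ExL (concat Ys) (And (Conj (map (\<lambda>Y. rename X Y F) Ys))
                                (Conj (map (\<lambda>(Y, Z). tup_ne Y Z) (pairs Ys)))))"
| "exists_ge X F Ys Inf = Top"
| "exists_ge X F Ys (Sym c) = Bot"
| "exists_ge X F Ys Sup = Bot"

fun exists_le :: "var list \<Rightarrow> fm \<Rightarrow> var list list \<Rightarrow> pc \<Rightarrow> fm" where
  "exists_le X F Ys (Num n) =
     (if n < 0 then Bot
      else AllL (concat Ys) (Imp (Conj (map (\<lambda>Y. rename X Y F) Ys))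
                                 (Disj (map (\<lambda>(Y, Z). tup_eq Y Z) (pairs Ys)))))"
| "exists_le X F Ys Inf = Bot"
| "exists_le X F Ys (Sym c) = Top"
| "exists_le X F Ys Sup = Top"

definition Defs_ax :: "fm set" where
  "Defs_ax = {AllL V (Iff (Agg Atleast X V F (map Var V @ [Pc r])) (exists_ge X F Ys r))
              | X V F r Ys. agg_ok X V F \<and> copies_ok X V F Ys (cnt_ge r)}
           \<union> {AllL V (Iff (Agg Atmost X V F (map Var V @ [Pc r])) (exists_le X F Ys r))
              | X V F r Ys. agg_ok X V F \<and> copies_ok X V F Ys (cnt_le r)}"

section \<open>Intuitionistic natural deduction, optionally with omega-rules\<close>

inductive nd :: "bool \<Rightarrow> fm set \<Rightarrow> fm set \<Rightarrow> fm \<Rightarrow> bool" for om :: bool and Ax :: "fm set" where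
  axiom: "F \<in> Ax \<Longrightarrow> nd om Ax \<Gamma> F"
| hyp: "F \<in> \<Gamma> \<Longrightarrow> nd om Ax \<Gamma> F"
| andI: "nd om Ax \<Gamma> F \<Longrightarrow> nd om Ax \<Gamma> G \<Longrightarrow> nd om Ax \<Gamma> (And F G)"
| andE1: "nd om Ax \<Gamma> (And F G) \<Longrightarrow> nd om Ax \<Gamma> F"
| andE2: "nd om Ax \<Gamma> (And F G) \<Longrightarrow> nd om Ax \<Gamma> G"
| orI1: "nd om Ax \<Gamma> F \<Longrightarrow> wf G \<Longrightarrow> nd om Ax \<Gamma> (Or F G)"
| orI2: "nd om Ax \<Gamma> G \<Longrightarrow> wf F \<Longrightarrow> nd om Ax \<Gamma> (Or F G)"
| orE: "nd om Ax \<Gamma> (Or F G) \<Longrightarrow> nd om Ax (insert F \<Gamma>) H \<Longrightarrow> nd om Ax (insert G \<Gamma>) H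
        \<Longrightarrow> nd om Ax \<Gamma> H"
| impI: "nd om Ax (insert F \<Gamma>) G \<Longrightarrow> wf F \<Longrightarrow> nd om Ax \<Gamma> (Imp F G)"
| impE: "nd om Ax \<Gamma> (Imp F G) \<Longrightarrow> nd om Ax \<Gamma> F \<Longrightarrow> nd om Ax \<Gamma> G"
| botE: "nd om Ax \<Gamma> Bot \<Longrightarrow> wf F \<Longrightarrow> nd om Ax \<Gamma> F"
| allI: "nd om Ax \<Gamma> F \<Longrightarrow> x \<notin> (\<Union>G\<in>\<Gamma>. fv G) \<Longrightarrow> nd om Ax \<Gamma> (All x F)"
| allE: "nd om Ax \<Gamma> (All x F) \<Longrightarrow> has_sort t (sortof x) \<Longrightarrow> free_for t x F
        \<Longrightarrow> nd om Ax \<Gamma> (subst x t F)"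
| exI: "nd om Ax \<Gamma> (subst x t F) \<Longrightarrow> has_sort t (sortof x) \<Longrightarrow> free_for t x F \<Longrightarrow> wf F
        \<Longrightarrow> nd om Ax \<Gamma> (Ex x F)"
| exE: "nd om Ax \<Gamma> (Ex x F) \<Longrightarrow> nd om Ax (insert F \<Gamma>) G \<Longrightarrow> x \<notin> fv G
        \<Longrightarrow> x \<notin> (\<Union>H\<in>\<Gamma>. fv H) \<Longrightarrow> nd om Ax \<Gamma> G"
| eqI: "gen_tm t \<Longrightarrow> nd om Ax \<Gamma> (Cmp Eq t t)"
| eqE: "nd om Ax \<Gamma> (Cmp Eq s t) \<Longrightarrow> nd om Ax \<Gamma> (subst x s F)
        \<Longrightarrow> has_sort s (sortof x) \<Longrightarrow> has_sort t (sortof x)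
        \<Longrightarrow> free_for s x F \<Longrightarrow> free_for t x F \<Longrightarrow> nd om Ax \<Gamma> (subst x t F)"
| omega: "om \<Longrightarrow> wf F \<Longrightarrow> (\<And>p. p \<in> dom_of (sortof x) \<Longrightarrow> nd om Ax \<Gamma> (subst x (Pc p) F))
        \<Longrightarrow> nd om Ax \<Gamma> (All x F)"

definition HT_sharp :: "fm \<Rightarrow> bool" where
  "HT_sharp F = nd False (HTax \<union> Std \<union> Ind \<union> D0 \<union> D1) {} F"

definition HT_sharp2_omega_from :: "fm set \<Rightarrow> fm \<Rightarrow> bool" where
  "HT_sharp2_omega_from Hs F = nd True (HTax \<union> Std \<union> Defs_ax \<union> Hs) {} F"

definition sentence :: "fm \<Rightarrow> bool" where
  "sentence F = (wf F \<and> fv F = {})"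

end

theory Submission
  imports Defs
begin

text \<open>With the \<omega>-rules both axiom schemas of \<open>HT_#\<close> that are missing in the target system
  become derivable.  An instance of induction is proved numeral by numeral.  For \<open>D1\<close>, the
  axioms \<open>D0\<close> make \<open>Start(t, v, n)\<close> (for \<open>n \<ge> 1\<close>) derivable exactly when there is a
  lexicographically increasing chain \<open>t = t\<^sub>1 < \<dots> < t\<^sub>n\<close> of tuples satisfying \<open>F(-, v)\<close>.
  Hence \<open>\<exists>X N (Start(X, v, N) \<and> N \<ge> r)\<close> says that at least \<open>r\<close> distinct tuples satisfy
  \<open>F(-, v)\<close>, which is how \<open>Defs\<close> expands \<open>Atleast(v, r)\<close> using \<open>r\<close> fresh copies of \<open>X\<close>;
  dually for \<open>Atmost\<close>.  Finally, an \<omega>-free derivation uses only finitely many of the closed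
  \<open>D1\<close> axioms, and these can be cut.\<close>

section \<open>Substitution\<close>

fun tsub :: "(var \<Rightarrow> tm) \<Rightarrow> tm \<Rightarrow> tm" where
  "tsub s (Var x) = s x"
| "tsub s (Pc p) = Pc p"
| "tsub s (Add a b) = Add (tsub s a) (tsub s b)"
| "tsub s (Sub a b) = Sub (tsub s a) (tsub s b)"
| "tsub s (Mul a b) = Mul (tsub s a) (tsub s b)"

text \<open>Simultaneous substitution without renaming of bound variables; it is capture-free
  when every variable is mapped to itself or to a closed term.\<close>
fun fsub :: "(var \<Rightarrow> tm) \<Rightarrow> fm \<Rightarrow> fm" where
  "fsub s Bot = Bot"
| "fsub s (Pred p ts) = Pred p (map (tsub s) ts)"
| "fsub s (Cmp c a b) = Cmp c (tsub s a) (tsub s b)"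
| "fsub s (And F G) = And (fsub s F) (fsub s G)"
| "fsub s (Or F G) = Or (fsub s F) (fsub s G)"
| "fsub s (Imp F G) = Imp (fsub s F) (fsub s G)"
| "fsub s (Ex x F) = Ex x (fsub (s(x := Var x)) F)"
| "fsub s (All x F) = All x (fsub (s(x := Var x)) F)"
| "fsub s (Agg k X V F ts) = Agg k X V F (map (tsub s) ts)"

definition closed_or_fixed :: "(var \<Rightarrow> tm) \<Rightarrow> bool" where
  "closed_or_fixed s = (\<forall>z. s z = Var z \<or> fvt (s z) = {})"

definition sort_respecting :: "(var \<Rightarrow> tm) \<Rightarrow> bool" where
  "sort_respecting s = (\<forall>z. has_sort (s z) (sortof z))"

lemma tsub_cong: "(\<And>z. z \<in> fvt t \<Longrightarrow> s z = s' z) \<Longrightarrow> tsub s t = tsub s' t"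
  by (induction t) auto

lemma fsub_cong: "(\<And>z. z \<in> fv F \<Longrightarrow> s z = s' z) \<Longrightarrow> fsub s F = fsub s' F"
proof (induction F arbitrary: s s')
  case (And F G) then show ?case by (metis UnCI fv.simps(4) fsub.simps(4))
next
  case (Or F G) then show ?case by (metis UnCI fv.simps(5) fsub.simps(5))
next
  case (Imp F G) then show ?case by (metis UnCI fv.simps(6) fsub.simps(6))
next
  case (Ex x F)
  have "fsub (s(x := Var x)) F = fsub (s'(x := Var x)) F" by (rule Ex.IH) (use Ex.prems in auto)
  then show ?case by simp
next
  case (All x F)
  have "fsub (s(x := Var x)) F = fsub (s'(x := Var x)) F" by (rule All.IH) (use All.prems in auto)
  then show ?case by simp
qed (auto intro!: tsub_cong)

lemma tsub_Var: "tsub Var t = t"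
  by (induction t) auto

lemma fsub_Var: "fsub Var F = F"
  by (induction F) (auto simp: tsub_Var map_idI)

lemma fsub_id: "(\<And>z. z \<in> fv F \<Longrightarrow> s z = Var z) \<Longrightarrow> fsub s F = F"
  using fsub_cong[of F s Var] fsub_Var by metis

lemma substt_tsub: "substt x t = tsub (Var(x := t))"
proof
  show "substt x t u = tsub (Var(x := t)) u" for u by (induction u) auto
qed

lemma subst_fsub: "subst x t F = fsub (Var(x := t)) F"
proof -
  have "(Var(x := t))(x := Var x) = Var" "\<And>y. y \<noteq> x \<Longrightarrow> (Var(x := t))(y := Var y) = Var(x := t)"
    by auto
  then show ?thesis by (induction F) (simp_all add: substt_tsub fsub_Var)
qed

lemma subst_self: "subst x (Var x) F = F"
  by (simp add: subst_fsub fsub_Var)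

lemma subst_fresh: "x \<notin> fv F \<Longrightarrow> subst x t F = F"
  unfolding subst_fsub by (rule fsub_id) auto

lemma fvt_tsub: "fvt (tsub s t) = (\<Union>z\<in>fvt t. fvt (s z))"
  by (induction t) auto

lemma fv_fsub: "fv (fsub s F) \<subseteq> (\<Union>z\<in>fv F. fvt (s z))"
proof (induction F arbitrary: s)
  case (Ex x F)
  have "fv (fsub (s(x := Var x)) F) \<subseteq> (\<Union>z\<in>fv F. fvt ((s(x := Var x)) z))" by (rule Ex.IH)
  then show ?case by (auto split: if_splits)
next
  case (All x F)
  have "fv (fsub (s(x := Var x)) F) \<subseteq> (\<Union>z\<in>fv F. fvt ((s(x := Var x)) z))" by (rule All.IH)
  then show ?case by (auto split: if_splits)
next
  case (And F G) show ?case using And.IH[of s] by auto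
next
  case (Or F G) show ?case using Or.IH[of s] by auto
next
  case (Imp F G) show ?case using Imp.IH[of s] by auto
qed (auto simp: fvt_tsub)

lemma tsub_tsub: "tsub s1 (tsub s2 t) = tsub (\<lambda>z. tsub s1 (s2 z)) t"
  by (induction t) auto

lemma tsub_closed: "fvt t = {} \<Longrightarrow> tsub s t = t"
  by (induction t) auto

lemma tsub_upd_Var:
  assumes "closed_or_fixed s2"
  shows "(\<lambda>z. tsub (s1(x := Var x)) ((s2(x := Var x)) z)) = (\<lambda>z. tsub s1 (s2 z))(x := Var x)"
proof
  fix z show "tsub (s1(x := Var x)) ((s2(x := Var x)) z) = ((\<lambda>z. tsub s1 (s2 z))(x := Var x)) z"
    using assms unfolding closed_or_fixed_def
    by (cases "z = x"; cases "s2 z = Var z") (auto simp: tsub_closed)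
qed

lemma fsub_fsub:
  "closed_or_fixed s2 \<Longrightarrow> fsub s1 (fsub s2 F) = fsub (\<lambda>z. tsub s1 (s2 z)) F"
proof (induction F arbitrary: s1 s2)
  case (Ex x F)
  have upd: "(\<lambda>z. tsub (s1(x := Var x)) ((s2(x := Var x)) z)) = (\<lambda>z. tsub s1 (s2 z))(x := Var x)"
    using Ex.prems by (rule tsub_upd_Var)
  have "closed_or_fixed (s2(x := Var x))"
    using Ex.prems by (auto simp: closed_or_fixed_def)
  then show ?case by (simp only: fsub.simps Ex.IH upd)
next
  case (All x F)
  have upd: "(\<lambda>z. tsub (s1(x := Var x)) ((s2(x := Var x)) z)) = (\<lambda>z. tsub s1 (s2 z))(x := Var x)"
    using All.prems by (rule tsub_upd_Var)
  have "closed_or_fixed (s2(x := Var x))"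
    using All.prems by (auto simp: closed_or_fixed_def)
  then show ?case by (simp only: fsub.simps All.IH upd)
qed (auto simp: tsub_tsub)

lemma gen_tm_if_int_tm: "int_tm t \<Longrightarrow> gen_tm t"
  by (cases t) auto

lemma gen_tm_if_has_sort: "has_sort t s \<Longrightarrow> gen_tm t"
  by (cases s) (auto simp: gen_tm_if_int_tm)

lemma has_sort_Var: "has_sort (Var x) (sortof x)"
  by (cases "sortof x") auto

lemma has_sort_Pc: "p \<in> dom_of (sortof x) \<Longrightarrow> has_sort (Pc p) (sortof x)"
  by (cases "sortof x") auto

lemma sort_respecting_Var: "sort_respecting Var"
  by (simp add: sort_respecting_def has_sort_Var)

lemma sort_respecting_upd:
  "sort_respecting s \<Longrightarrow> has_sort t (sortof x) \<Longrightarrow> sort_respecting (s(x := t))"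
  by (simp add: sort_respecting_def)

lemma int_tm_tsub: "sort_respecting s \<Longrightarrow> int_tm t \<Longrightarrow> int_tm (tsub s t)"
  unfolding sort_respecting_def by (induction t) (auto, metis has_sort.simps(2))

lemma gen_tm_tsub: "sort_respecting s \<Longrightarrow> gen_tm t \<Longrightarrow> gen_tm (tsub s t)"
  using int_tm_tsub[of s] gen_tm_if_has_sort unfolding sort_respecting_def by (cases t) auto

lemma has_sort_tsub: "sort_respecting s \<Longrightarrow> has_sort t k \<Longrightarrow> has_sort (tsub s t) k"
  by (cases k) (auto simp: int_tm_tsub gen_tm_tsub)

lemma wf_fsub: "sort_respecting s \<Longrightarrow> wf F \<Longrightarrow> wf (fsub s F)"
proof (induction F arbitrary: s)
  case (Agg k X V F ts)
  then show ?case by (auto simp: list_all2_conv_all_nth has_sort_tsub)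
qed (auto intro: sort_respecting_upd has_sort_Var gen_tm_tsub)

lemma wf_subst: "has_sort t (sortof x) \<Longrightarrow> wf F \<Longrightarrow> wf (subst x t F)"
  unfolding subst_fsub by (rule wf_fsub) (auto intro: sort_respecting_upd sort_respecting_Var)

lemma free_for_closed: "fvt t \<subseteq> {x} \<Longrightarrow> free_for t x F"
  by (induction t x F rule: free_for.induct) auto

lemma subst_subst: "subst x s (subst x t F) = subst x (substt x s t) F"
proof -
  have "substt x s (substt x t u) = substt x (substt x s t) u" for u
    by (induction u) auto
  then show ?thesis by (induction F) auto
qed

section \<open>Derived rules of natural deduction\<close>

definition closed_set :: "fm set \<Rightarrow> bool" where
  "closed_set \<Gamma> = (\<forall>B\<in>\<Gamma>. fv B = {})"

lemma closed_set_insert: "closed_set (insert A \<Gamma>) = (fv A = {} \<and> closed_set \<Gamma>)"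
  by (simp add: closed_set_def)

text \<open>Only closed hypotheses may be added, because of the eigenvariable conditions.\<close>
lemma nd_weaken:
  "nd om Ax \<Gamma> F \<Longrightarrow> \<Gamma> \<subseteq> \<Gamma>' \<Longrightarrow> closed_set (\<Gamma>' - \<Gamma>) \<Longrightarrow> nd om Ax \<Gamma>' F"
proof (induction arbitrary: \<Gamma>' rule: nd.induct)
  case (orE \<Gamma> F G H)
  have "nd om Ax (insert F \<Gamma>') H" "nd om Ax (insert G \<Gamma>') H"
    by (rule orE.IH(2,3); use orE.prems in \<open>auto simp: closed_set_def\<close>)+
  then show ?case using orE.IH(1)[OF orE.prems] by (rule nd.orE[rotated])
next
  case (impI F \<Gamma> G)
  have "nd om Ax (insert F \<Gamma>') G" by (rule impI.IH) (use impI.prems in \<open>auto simp: closed_set_def\<close>)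
  then show ?case using impI.hyps(2) by (rule nd.impI)
next
  case (allI \<Gamma> F x)
  have "x \<notin> (\<Union>G\<in>\<Gamma>'. fv G)" using allI.hyps(2) allI.prems by (auto simp: closed_set_def)
  then show ?case by (rule nd.allI[OF allI.IH[OF allI.prems]])
next
  case (exE \<Gamma> x F G)
  have "nd om Ax (insert F \<Gamma>') G" by (rule exE.IH(2)) (use exE.prems in \<open>auto simp: closed_set_def\<close>)
  moreover have "x \<notin> (\<Union>H\<in>\<Gamma>'. fv H)" using exE.hyps(4) exE.prems by (auto simp: closed_set_def)
  ultimately show ?case by (rule nd.exE[OF exE.IH(1)[OF exE.prems] _ exE.hyps(3)])
next
  case (eqE \<Gamma> s t x F)
  show ?case by (rule nd.eqE[OF eqE.IH(1)[OF eqE.prems] eqE.IH(2)[OF eqE.prems] eqE.hyps(3-6)])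
next
  case (omega F x \<Gamma>)
  then show ?case by (intro nd.omega) auto
qed (auto intro: nd.intros)

lemma nd_weaken_closed: "nd om Ax \<Gamma> F \<Longrightarrow> \<Gamma> \<subseteq> \<Gamma>' \<Longrightarrow> closed_set \<Gamma>' \<Longrightarrow> nd om Ax \<Gamma>' F"
  by (erule nd_weaken) (auto simp: closed_set_def)

lemma nd_weaken_insert: "nd om Ax \<Gamma> F \<Longrightarrow> fv B = {} \<Longrightarrow> nd om Ax (insert B \<Gamma>) F"
  by (erule nd_weaken) (auto simp: closed_set_def)

lemma nd_cut: "nd om Ax (insert A \<Gamma>) G \<Longrightarrow> nd om Ax \<Gamma> A \<Longrightarrow> wf A \<Longrightarrow> nd om Ax \<Gamma> G"
  by (rule nd.impE[OF nd.impI])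

lemma nd_hyp_insert: "nd om Ax (insert A \<Gamma>) A"
  by (rule nd.hyp) simp

lemma nd_Top: "nd om Ax \<Gamma> Top"
  unfolding Top_def by (rule nd.impI) (auto intro: nd.hyp)

lemma nd_IffD1: "nd om Ax \<Gamma> (Iff A B) \<Longrightarrow> nd om Ax \<Gamma> A \<Longrightarrow> nd om Ax \<Gamma> B"
  unfolding Iff_def by (meson nd.andE1 nd.impE)

lemma nd_IffD2: "nd om Ax \<Gamma> (Iff A B) \<Longrightarrow> nd om Ax \<Gamma> B \<Longrightarrow> nd om Ax \<Gamma> A"
  unfolding Iff_def by (meson nd.andE2 nd.impE)

lemma nd_IffI:
  "nd om Ax (insert A \<Gamma>) B \<Longrightarrow> nd om Ax (insert B \<Gamma>) A \<Longrightarrow> wf A \<Longrightarrow> wf B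
   \<Longrightarrow> nd om Ax \<Gamma> (Iff A B)"
  unfolding Iff_def by (intro nd.andI nd.impI)

lemma wf_Conj: "(\<And>A. A \<in> set Fs \<Longrightarrow> wf A) \<Longrightarrow> wf (Conj Fs)"
  by (induction Fs) (auto simp: Conj_def Top_def)

lemma wf_Disj: "(\<And>A. A \<in> set Fs \<Longrightarrow> wf A) \<Longrightarrow> wf (Disj Fs)"
  by (induction Fs) (auto simp: Disj_def)

lemma fv_Conj: "fv (Conj Fs) = (\<Union>A\<in>set Fs. fv A)"
  by (induction Fs) (auto simp: Conj_def Top_def)

lemma fv_Disj: "fv (Disj Fs) = (\<Union>A\<in>set Fs. fv A)"
  by (induction Fs) (auto simp: Disj_def)

lemma nd_ConjE: "nd om Ax \<Gamma> (Conj Fs) \<Longrightarrow> A \<in> set Fs \<Longrightarrow> nd om Ax \<Gamma> A"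
  by (induction Fs) (auto simp: Conj_def intro: nd.andE1 nd.andE2)

lemma nd_ConjI: "(\<And>A. A \<in> set Fs \<Longrightarrow> nd om Ax \<Gamma> A) \<Longrightarrow> nd om Ax \<Gamma> (Conj Fs)"
  by (induction Fs) (auto simp: Conj_def nd_Top intro: nd.andI)

section \<open>Instantiating variables by precomputed terms\<close>

definition inst :: "var list \<Rightarrow> pc list \<Rightarrow> var \<Rightarrow> tm" where
  "inst xs ps z = (case map_of (zip xs ps) z of Some p \<Rightarrow> Pc p | None \<Rightarrow> Var z)"

definition assignment :: "var list \<Rightarrow> pc list \<Rightarrow> bool" where
  "assignment xs ps = list_all2 (\<lambda>s p. p \<in> dom_of s) (map sortof xs) ps"

lemma inst_Nil: "inst [] ps = Var"
  by (rule ext) (simp add: inst_def)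

lemma inst_Cons_eq: "inst (x # xs) (p # ps) x = Pc p"
  by (simp add: inst_def)

lemma inst_Cons_ne: "z \<noteq> x \<Longrightarrow> inst (x # xs) (p # ps) z = inst xs ps z"
  by (simp add: inst_def)

lemma closed_or_fixed_inst: "closed_or_fixed (inst xs ps)"
  unfolding closed_or_fixed_def inst_def by (auto split: option.splits)

lemma closed_or_fixed_upd_Pc: "closed_or_fixed (Var(x := Pc p))"
  unfolding closed_or_fixed_def by auto

lemma fsub_inst_subst: "fsub (inst xs ps) (subst x (Pc p) B) = fsub (inst (x # xs) (p # ps)) B"
proof -
  have "fsub (inst xs ps) (subst x (Pc p) B) = fsub (\<lambda>z. tsub (inst xs ps) ((Var(x := Pc p)) z)) B"
    unfolding subst_fsub by (rule fsub_fsub[OF closed_or_fixed_upd_Pc])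
  also have "(\<lambda>z. tsub (inst xs ps) ((Var(x := Pc p)) z)) = inst (x # xs) (p # ps)"
  proof
    fix z show "tsub (inst xs ps) ((Var(x := Pc p)) z) = inst (x # xs) (p # ps) z"
      by (cases "z = x") (simp_all add: inst_Cons_eq inst_Cons_ne)
  qed
  finally show ?thesis .
qed

lemma subst_AllL: "x \<notin> set xs \<Longrightarrow> subst x t (AllL xs B) = AllL xs (subst x t B)"
  by (induction xs) (auto simp: AllL_def)

lemma subst_ExL: "x \<notin> set xs \<Longrightarrow> subst x t (ExL xs B) = ExL xs (subst x t B)"
  by (induction xs) (auto simp: ExL_def)

lemma fv_AllL: "fv (AllL xs B) = fv B - set xs"
  by (induction xs) (auto simp: AllL_def)

lemma fv_ExL: "fv (ExL xs B) = fv B - set xs"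
  by (induction xs) (auto simp: ExL_def)

lemma wf_AllL: "wf (AllL xs B) = wf B"
  by (induction xs) (auto simp: AllL_def)

lemma wf_ExL: "wf (ExL xs B) = wf B"
  by (induction xs) (auto simp: ExL_def)

lemma AllL_Cons: "AllL (x # xs) B = All x (AllL xs B)"
  by (simp add: AllL_def)

lemma ExL_Cons: "ExL (x # xs) B = Ex x (ExL xs B)"
  by (simp add: ExL_def)

lemma assignment_Cons: "assignment (x # xs) (p # ps) = (p \<in> dom_of (sortof x) \<and> assignment xs ps)"
  by (simp add: assignment_def)

lemma assignment_Nil: "assignment [] ps = (ps = [])"
  by (auto simp: assignment_def)

lemma assignment_ConsE: "assignment (x # xs) qs \<Longrightarrow> \<exists>p ps. qs = p # ps \<and> p \<in> dom_of (sortof x) \<and> assignment xs ps"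
  by (auto simp: assignment_def list_all2_Cons1)

lemma fv_subst_Pc: "fv (subst x (Pc p) B) \<subseteq> fv B - {x}"
proof -
  have "fv (subst x (Pc p) B) \<subseteq> (\<Union>z\<in>fv B. fvt ((Var(x := Pc p)) z))"
    unfolding subst_fsub by (rule fv_fsub)
  also have "... \<subseteq> fv B - {x}"
  proof
    fix w assume "w \<in> (\<Union>z\<in>fv B. fvt ((Var(x := Pc p)) z))"
    then obtain z where "z \<in> fv B" "w \<in> fvt ((Var(x := Pc p)) z)" by blast
    then show "w \<in> fv B - {x}" by (cases "z = x") auto
  qed
  finally show ?thesis .
qed

lemma inst_append:
  "length ps = length xs \<Longrightarrow> inst (xs @ ys) (ps @ qs) z = (if z \<in> set xs then inst xs ps z else inst ys qs z)"
proof -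
  assume l: "length ps = length xs"
  have z: "zip (xs @ ys) (ps @ qs) = zip xs ps @ zip ys qs" using l by simp
  show ?thesis
  proof (cases "z \<in> set xs")
    case True
    then obtain p where p: "map_of (zip xs ps) z = Some p"
      using map_of_zip_is_None[of xs ps z] l by (cases "map_of (zip xs ps) z") auto
    then show ?thesis using True unfolding inst_def z by simp
  next
    case False
    then have "map_of (zip xs ps) z = None" using map_of_zip_is_None[of xs ps z] l by simp
    then show ?thesis using False unfolding inst_def z by (simp add: map_add_def)
  qed
qed

lemma inst_notin: "z \<notin> set xs \<Longrightarrow> inst xs ps z = Var z"
proof -
  assume a: "z \<notin> set xs"
  have "map_of (zip xs ps) z = None"
    using a by (metis map_of_SomeD not_None_eq set_zip_leftD)
  then show ?thesis by (simp add: inst_def)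
qed

lemma inst_nth: "distinct xs \<Longrightarrow> length ps = length xs \<Longrightarrow> i < length xs \<Longrightarrow> inst xs ps (xs ! i) = Pc (ps ! i)"
  unfolding inst_def by (simp add: map_of_zip_nth)

lemma map_inst: "distinct xs \<Longrightarrow> length ps = length xs \<Longrightarrow> map (inst xs ps) xs = map Pc ps"
  by (rule nth_equalityI) (auto simp: inst_nth)

lemma inst_in_set: "length ps = length xs \<Longrightarrow> z \<in> set xs \<Longrightarrow> \<exists>p. inst xs ps z = Pc p"
  unfolding inst_def by (auto split: option.splits)

lemma fsub_ExL: "(\<And>z. z \<in> set xs \<Longrightarrow> s z = Var z) \<Longrightarrow> fsub s (ExL xs B) = ExL xs (fsub s B)"
proof (induction xs arbitrary: s)
  case Nil then show ?case by (simp add: ExL_def)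
next
  case (Cons x xs)
  have "s(x := Var x) = s" using Cons.prems by (intro ext) auto
  then show ?case using Cons by (simp add: ExL_def)
qed

lemma fsub_AllL: "(\<And>z. z \<in> set xs \<Longrightarrow> s z = Var z) \<Longrightarrow> fsub s (AllL xs B) = AllL xs (fsub s B)"
proof (induction xs arbitrary: s)
  case Nil then show ?case by (simp add: AllL_def)
next
  case (Cons x xs)
  have "s(x := Var x) = s" using Cons.prems by (intro ext) auto
  then show ?case using Cons by (simp add: AllL_def)
qed

lemma fsub_Iff: "fsub s (Iff A B) = Iff (fsub s A) (fsub s B)"
  by (simp add: Iff_def)

lemma fsub_Top: "fsub s Top = Top"
  by (simp add: Top_def)

lemma fsub_Conj: "fsub s (Conj Fs) = Conj (map (fsub s) Fs)"
  by (induction Fs) (auto simp: Conj_def Top_def)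

lemma fsub_Disj: "fsub s (Disj Fs) = Disj (map (fsub s) Fs)"
  by (induction Fs) (auto simp: Disj_def)

lemma map_inst_append_left: "distinct (xs @ ys) \<Longrightarrow> length ps = length xs \<Longrightarrow> map (inst (xs @ ys) (ps @ qs)) xs = map Pc ps"
proof -
  assume d: "distinct (xs @ ys)" and l: "length ps = length xs"
  have "map (inst (xs @ ys) (ps @ qs)) xs = map (inst xs ps) xs"
    by (rule map_cong[OF refl]) (simp add: inst_append[OF l])
  also have "... = map Pc ps" using d l by (simp add: map_inst)
  finally show ?thesis .
qed

lemma map_inst_append_right: "distinct (xs @ ys) \<Longrightarrow> length ps = length xs \<Longrightarrow> length qs = length ys
  \<Longrightarrow> map (inst (xs @ ys) (ps @ qs)) ys = map Pc qs"
proof -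
  assume d: "distinct (xs @ ys)" and l: "length ps = length xs" and l2: "length qs = length ys"
  have "map (inst (xs @ ys) (ps @ qs)) ys = map (inst ys qs) ys"
    by (rule map_cong[OF refl]) (use d in \<open>auto simp: inst_append[OF l]\<close>)
  also have "... = map Pc qs" using d l2 by (simp add: map_inst)
  finally show ?thesis .
qed

lemma assignment_append: "assignment xs ps \<Longrightarrow> assignment ys qs \<Longrightarrow> assignment (xs @ ys) (ps @ qs)"
  by (simp add: assignment_def list_all2_appendI)

lemma assignment_length: "assignment xs ps \<Longrightarrow> length ps = length xs"
  by (metis assignment_def length_map list_all2_lengthD)

lemma list_all2_has_sort_assignment: "assignment xs ps \<Longrightarrow> list_all2 has_sort (map Pc ps) (map sortof xs)"
  unfolding assignment_def list_all2_conv_all_nth by (auto simp: has_sort_Pc)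

lemma list_all2_has_sort_Var: "list_all2 has_sort (map Var xs) (map sortof xs)"
  by (auto simp: list_all2_conv_all_nth has_sort_Var)

lemma sort_respecting_inst: "assignment xs ps \<Longrightarrow> sort_respecting (inst xs ps)"
  unfolding sort_respecting_def
proof
  fix z assume o: "assignment xs ps"
  show "has_sort (inst xs ps z) (sortof z)"
  proof (cases "map_of (zip xs ps) z")
    case None then show ?thesis by (simp add: inst_def has_sort_Var)
  next
    case (Some p)
    then have "(z, p) \<in> set (zip xs ps)" by (rule map_of_SomeD)
    then obtain i where i: "i < length xs" "xs ! i = z" "ps ! i = p" using o
      by (auto simp: set_zip assignment_def list_all2_conv_all_nth)
    then have "p \<in> dom_of (sortof z)" using o by (auto simp: assignment_def list_all2_conv_all_nth)
    then show ?thesis using Some by (simp add: inst_def has_sort_Pc)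
  qed
qed

lemma fv_fsub_inst: "length ps = length xs \<Longrightarrow> fv (fsub (inst xs ps) B) \<subseteq> fv B - set xs"
proof -
  assume l: "length ps = length xs"
  have "fvt (inst xs ps z) \<subseteq> {z} - set xs" for z
    using inst_in_set[OF l, of z] inst_notin[of z xs ps] by (cases "z \<in> set xs") auto
  then show ?thesis using fv_fsub[of "inst xs ps" B] by blast
qed

lemma fsub_inst_inst: "length v = length xs \<Longrightarrow> fsub (inst ys ps) (fsub (inst xs v) B) = fsub (inst (xs @ ys) (v @ ps)) B"
proof -
  assume l: "length v = length xs"
  have "fsub (inst ys ps) (fsub (inst xs v) B) = fsub (\<lambda>z. tsub (inst ys ps) (inst xs v z)) B"
    by (rule fsub_fsub[OF closed_or_fixed_inst])
  also have "(\<lambda>z. tsub (inst ys ps) (inst xs v z)) = inst (xs @ ys) (v @ ps)"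
  proof
    fix z show "tsub (inst ys ps) (inst xs v z) = inst (xs @ ys) (v @ ps) z"
    proof (cases "z \<in> set xs")
      case True
      then obtain p where "inst xs v z = Pc p" using inst_in_set[of v xs z] l by auto
      then show ?thesis using True by (simp add: inst_append l)
    next
      case False then show ?thesis by (simp add: inst_append l inst_notin)
    qed
  qed
  finally show ?thesis .
qed

lemma nd_AllL_E:
  "nd om Ax \<Gamma> (AllL xs B) \<Longrightarrow> distinct xs \<Longrightarrow> assignment xs ps \<Longrightarrow> nd om Ax \<Gamma> (fsub (inst xs ps) B)"
proof (induction xs arbitrary: B ps)
  case Nil then show ?case by (simp add: assignment_Nil inst_Nil fsub_Var AllL_def)
next
  case (Cons x xs)
  obtain p ps' where ps: "ps = p # ps'" "p \<in> dom_of (sortof x)" "assignment xs ps'"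
    using assignment_ConsE[OF Cons.prems(3)] by blast
  have "nd om Ax \<Gamma> (subst x (Pc p) (AllL xs B))"
    using Cons.prems(1) unfolding AllL_Cons
    by (rule nd.allE) (auto intro: has_sort_Pc[OF ps(2)] free_for_closed)
  then have "nd om Ax \<Gamma> (AllL xs (subst x (Pc p) B))"
    using Cons.prems(2) by (simp add: subst_AllL)
  then have "nd om Ax \<Gamma> (fsub (inst xs ps') (subst x (Pc p) B))"
    using Cons.IH Cons.prems(2) ps(3) by simp
  then show ?case unfolding fsub_inst_subst ps(1) .
qed

lemma nd_AllL_omega:
  "wf B \<Longrightarrow> distinct xs \<Longrightarrow> (\<And>ps. assignment xs ps \<Longrightarrow> nd True Ax \<Gamma> (fsub (inst xs ps) B))
   \<Longrightarrow> nd True Ax \<Gamma> (AllL xs B)"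
proof (induction xs arbitrary: B)
  case Nil
  have "nd True Ax \<Gamma> (fsub (inst [] []) B)" by (rule Nil.prems(3)) (simp add: assignment_Nil)
  then show ?case by (simp add: inst_Nil fsub_Var AllL_def)
next
  case (Cons x xs)
  show ?case unfolding AllL_Cons
  proof (rule nd.omega)
    show "wf (AllL xs B)" using Cons.prems(1) by (simp add: wf_AllL)
    fix p assume p: "p \<in> dom_of (sortof x)"
    have "nd True Ax \<Gamma> (AllL xs (subst x (Pc p) B))"
    proof (rule Cons.IH)
      show "wf (subst x (Pc p) B)" by (rule wf_subst[OF has_sort_Pc[OF p] Cons.prems(1)])
      show "distinct xs" using Cons.prems(2) by simp
      fix ps assume "assignment xs ps"
      then have "assignment (x # xs) (p # ps)" using p by (simp add: assignment_Cons)
      then show "nd True Ax \<Gamma> (fsub (inst xs ps) (subst x (Pc p) B))"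
        unfolding fsub_inst_subst by (rule Cons.prems(3))
    qed
    then show "nd True Ax \<Gamma> (subst x (Pc p) (AllL xs B))"
      using Cons.prems(2) by (simp add: subst_AllL)
  qed simp
qed

lemma nd_ExL_I:
  "wf B \<Longrightarrow> distinct xs \<Longrightarrow> assignment xs ps \<Longrightarrow> nd om Ax \<Gamma> (fsub (inst xs ps) B)
   \<Longrightarrow> nd om Ax \<Gamma> (ExL xs B)"
proof (induction xs arbitrary: B ps)
  case Nil then show ?case by (simp add: assignment_Nil inst_Nil fsub_Var ExL_def)
next
  case (Cons x xs)
  obtain p ps' where ps: "ps = p # ps'" "p \<in> dom_of (sortof x)" "assignment xs ps'"
    using assignment_ConsE[OF Cons.prems(3)] by blast
  have "nd om Ax \<Gamma> (ExL xs (subst x (Pc p) B))"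
  proof (rule Cons.IH)
    show "wf (subst x (Pc p) B)" by (rule wf_subst[OF has_sort_Pc[OF ps(2)] Cons.prems(1)])
    show "distinct xs" using Cons.prems(2) by simp
    show "assignment xs ps'" by (rule ps(3))
    show "nd om Ax \<Gamma> (fsub (inst xs ps') (subst x (Pc p) B))"
      unfolding fsub_inst_subst using Cons.prems(4) ps(1) by simp
  qed
  then have "nd om Ax \<Gamma> (subst x (Pc p) (ExL xs B))"
    using Cons.prems(2) by (simp add: subst_ExL)
  then show ?case unfolding ExL_Cons
    by (rule nd.exI) (auto intro: has_sort_Pc[OF ps(2)] free_for_closed simp: wf_ExL Cons.prems(1))
qed

lemma nd_Ex_omega_E:
  assumes C: "closed_set C" and E: "nd True Ax C (Ex x Q)" and fQ: "fv Q \<subseteq> {x}" and wQ: "wf Q"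
    and wG: "wf G" and fG: "fv G = {}"
    and H: "\<And>p. p \<in> dom_of (sortof x) \<Longrightarrow> nd True Ax (insert (subst x (Pc p) Q) C) G"
  shows "nd True Ax C G"
proof -
  let ?A = "All x (Imp Q G)"
  have fA: "fv ?A = {}" using fQ fG by auto
  have wA: "wf ?A" using wQ wG by simp
  have A: "nd True Ax C ?A"
  proof (rule nd.omega)
    show "wf (Imp Q G)" using wQ wG by simp
    fix p assume p: "p \<in> dom_of (sortof x)"
    have "nd True Ax C (Imp (subst x (Pc p) Q) G)"
      by (rule nd.impI[OF H[OF p]]) (rule wf_subst[OF has_sort_Pc[OF p] wQ])
    then show "nd True Ax C (subst x (Pc p) (Imp Q G))"
      using fG by (simp add: subst_fresh)
  qed simp
  have E': "nd True Ax (insert ?A C) (Ex x Q)" by (rule nd_weaken_insert[OF E fA])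
  have "nd True Ax (insert Q (insert ?A C)) (subst x (Var x) (Imp Q G))"
    by (rule nd.allE[OF nd.hyp]) (auto intro: has_sort_Var free_for_closed)
  then have I: "nd True Ax (insert Q (insert ?A C)) (Imp Q G)" by (simp only: subst_self)
  have "nd True Ax (insert Q (insert ?A C)) G"
    by (rule nd.impE[OF I nd.hyp]) simp
  then have "nd True Ax (insert ?A C) G"
    by (rule nd.exE[OF E']) (use fG fA C in \<open>auto simp: closed_set_def\<close>)
  then show ?thesis by (rule nd_cut[OF _ A wA])
qed

lemma nd_ExL_omega_E:
  "closed_set C \<Longrightarrow> nd True Ax C (ExL xs B) \<Longrightarrow> distinct xs \<Longrightarrow> fv B \<subseteq> set xs \<Longrightarrow> wf B
   \<Longrightarrow> wf G \<Longrightarrow> fv G = {}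
   \<Longrightarrow> (\<And>ps. assignment xs ps \<Longrightarrow> nd True Ax (insert (fsub (inst xs ps) B) C) G)
   \<Longrightarrow> nd True Ax C G"
proof (induction xs arbitrary: B C)
  case Nil
  have "nd True Ax (insert (fsub (inst [] []) B) C) G" by (rule Nil.prems(8)) (simp add: assignment_Nil)
  then have "nd True Ax (insert B C) G" by (simp add: inst_Nil fsub_Var)
  moreover have "nd True Ax C B" using Nil.prems(2) by (simp add: ExL_def)
  ultimately show ?case using Nil.prems(5) by (rule nd_cut)
next
  case (Cons x xs)
  show ?case
  proof (rule nd_Ex_omega_E[OF Cons.prems(1)])
    show "nd True Ax C (Ex x (ExL xs B))" using Cons.prems(2) by (simp add: ExL_Cons)
    show "fv (ExL xs B) \<subseteq> {x}" using Cons.prems(4) by (auto simp: fv_ExL)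
    show "wf (ExL xs B)" using Cons.prems(5) by (simp add: wf_ExL)
    show "wf G" "fv G = {}" by (rule Cons.prems)+
    fix p assume p: "p \<in> dom_of (sortof x)"
    let ?B = "subst x (Pc p) B"
    have xn: "x \<notin> set xs" using Cons.prems(3) by simp
    have fB: "fv ?B \<subseteq> set xs" using fv_subst_Pc[of x p B] Cons.prems(4) by auto
    have fE: "fv (ExL xs ?B) = {}" using fB by (auto simp: fv_ExL)
    have "nd True Ax (insert (ExL xs ?B) C) G"
    proof (rule Cons.IH)
      show "closed_set (insert (ExL xs ?B) C)" using fE Cons.prems(1) by (simp add: closed_set_insert)
      show "nd True Ax (insert (ExL xs ?B) C) (ExL xs ?B)" by (rule nd.hyp) simp
      show "distinct xs" using Cons.prems(3) by simp
      show "fv ?B \<subseteq> set xs" by (rule fB)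
      show "wf ?B" by (rule wf_subst[OF has_sort_Pc[OF p] Cons.prems(5)])
      show "wf G" "fv G = {}" by (rule Cons.prems)+
      fix ps assume "assignment xs ps"
      then have "assignment (x # xs) (p # ps)" using p by (simp add: assignment_Cons)
      then have "nd True Ax (insert (fsub (inst (x # xs) (p # ps)) B) C) G" by (rule Cons.prems(8))
      then have "nd True Ax (insert (ExL xs ?B) (insert (fsub (inst xs ps) ?B) C)) G"
        unfolding fsub_inst_subst by (rule nd_weaken_insert[OF _ fE])
      then show "nd True Ax (insert (fsub (inst xs ps) ?B) (insert (ExL xs ?B) C)) G"
        by (simp add: insert_commute)
    qed
    then show "nd True Ax (insert (subst x (Pc p) (ExL xs B)) C) G"
      using xn by (simp add: subst_ExL)
  qed
qed

section \<open>True arithmetic and the lexicographic order\<close>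

definition closed_arith :: "fm \<Rightarrow> bool" where
  "closed_arith A = (wf A \<and> fv A = {} \<and> arith_only A)"

lemma closed_arith_Cmp_Pc [simp]: "closed_arith (Cmp c (Pc p) (Pc q))"
  by (simp add: closed_arith_def)

lemma closed_arith_Conj: "closed_arith (Conj Fs) = (\<forall>A\<in>set Fs. closed_arith A)"
  by (induction Fs) (auto simp: Conj_def Top_def closed_arith_def)

lemma closed_arith_Disj: "closed_arith (Disj Fs) = (\<forall>A\<in>set Fs. closed_arith A)"
  by (induction Fs) (auto simp: Disj_def closed_arith_def)

lemma holds_Conj: "holds e (Conj Fs) = (\<forall>A\<in>set Fs. holds e A)"
  by (induction Fs) (auto simp: Conj_def Top_def)

lemma holds_Disj: "holds e (Disj Fs) = (\<exists>A\<in>set Fs. holds e A)"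
  by (induction Fs) (auto simp: Disj_def)

lemma nd_Std: "Std \<subseteq> Ax \<Longrightarrow> closed_arith A \<Longrightarrow> holds (\<lambda>_. Num 0) A \<Longrightarrow> nd om Ax \<Gamma> A"
  by (rule nd.axiom) (auto simp: Std_def closed_arith_def)

lemma nd_Std_Bot:
  assumes "Std \<subseteq> Ax" "closed_arith A" "\<not> holds (\<lambda>_. Num 0) A" "nd om Ax \<Gamma> A"
  shows "nd om Ax \<Gamma> Bot"
proof -
  have "nd om Ax \<Gamma> (Imp A Bot)" by (rule nd_Std) (use assms in \<open>auto simp: closed_arith_def\<close>)
  then show ?thesis using assms(4) by (rule nd.impE)
qed

fun lex_fm :: "tm list \<Rightarrow> tm list \<Rightarrow> fm" where
  "lex_fm (a # as) (b # bs) = Or (Cmp Lt a b) (And (Cmp Eq a b) (lex_fm as bs))"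
| "lex_fm _ _ = Bot"

fun lex_less :: "pc list \<Rightarrow> pc list \<Rightarrow> bool" where
  "lex_less (a # as) (b # bs) = (pc_less a b \<or> (a = b \<and> lex_less as bs))"
| "lex_less _ _ = False"

lemma fsub_lexless: "fsub s (lexless xs us) = lex_fm (map s xs) (map s us)"
  by (induction xs us rule: lexless.induct) auto

lemma fsub_lex_fm: "fsub s (lex_fm (map Pc t) us) = lex_fm (map Pc t) (map (tsub s) us)"
  by (induction "map Pc t" us arbitrary: t rule: lex_fm.induct) auto

lemma closed_arith_lex_fm: "closed_arith (lex_fm (map Pc t) (map Pc u))"
  by (induction t u rule: lex_less.induct) (auto simp: closed_arith_def)

lemma holds_lex_fm: "holds e (lex_fm (map Pc t) (map Pc u)) = lex_less t u"
  by (induction t u rule: lex_less.induct) auto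

lemma wf_lex_fm: "(\<And>a. a \<in> set as \<Longrightarrow> gen_tm a) \<Longrightarrow> (\<And>b. b \<in> set bs \<Longrightarrow> gen_tm b) \<Longrightarrow> wf (lex_fm as bs)"
  by (induction as bs rule: lex_fm.induct) auto

lemma fv_lex_fm: "fv (lex_fm as bs) \<subseteq> (\<Union>a\<in>set as. fvt a) \<union> (\<Union>b\<in>set bs. fvt b)"
  by (induction as bs rule: lex_fm.induct) auto

lemma pc_less_irrefl: "\<not> pc_less a a"
  by (cases a) auto

lemma pc_less_trans: "pc_less a b \<Longrightarrow> pc_less b c \<Longrightarrow> pc_less a c"
  by (cases a; cases b; cases c) auto

lemma pc_less_total: "a \<noteq> b \<Longrightarrow> pc_less a b \<or> pc_less b a"
  by (cases a; cases b) auto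

lemma lex_less_irrefl: "\<not> lex_less t t"
  by (induction t) (auto simp: pc_less_irrefl)

lemma lex_less_trans: "lex_less t u \<Longrightarrow> lex_less u w \<Longrightarrow> lex_less t w"
proof (induction t u arbitrary: w rule: lex_less.induct)
  case (1 a as b bs)
  then obtain c cs where w: "w = c # cs" by (cases w) auto
  show ?case using 1 unfolding w by (auto intro: pc_less_trans)
qed auto

lemma lex_less_total: "length t = length u \<Longrightarrow> t \<noteq> u \<Longrightarrow> lex_less t u \<or> lex_less u t"
  by (induction t u rule: lex_less.induct) (use pc_less_total in auto)

lemma finite_total_has_least:
  assumes "finite A" "A \<noteq> {}" "transp R"
    and total: "\<And>x y. x \<in> A \<Longrightarrow> y \<in> A \<Longrightarrow> x \<noteq> y \<Longrightarrow> R x y \<or> R y x"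
  shows "\<exists>m\<in>A. \<forall>y\<in>A - {m}. R m y"
  using assms(1,2) total
proof (induction A rule: finite_ne_induct)
  case (insert x A)
  then obtain m where m: "m \<in> A" "\<forall>y\<in>A - {m}. R m y" by blast
  show ?case
  proof (cases "R x m")
    case True
    then show ?thesis using m \<open>transp R\<close> \<open>x \<notin> A\<close> by (auto dest: transpD)
  next
    case False
    then show ?thesis using m insert.prems[of x m] \<open>x \<notin> A\<close> by auto
  qed
qed simp

lemma finite_total_sorted_wrt:
  assumes "finite A" "transp R"
    and total: "\<And>x y. x \<in> A \<Longrightarrow> y \<in> A \<Longrightarrow> x \<noteq> y \<Longrightarrow> R x y \<or> R y x"
  shows "\<exists>xs. sorted_wrt R xs \<and> set xs = A"
  using assms(1) total
proof (induction A rule: finite_remove_induct)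
  case (remove A)
  obtain m where m: "m \<in> A" "\<forall>y\<in>A - {m}. R m y"
    using finite_total_has_least[OF remove.hyps(1,2) assms(2)] remove.prems by blast
  obtain xs where "sorted_wrt R xs" "set xs = A - {m}"
    using remove.IH[OF m(1)] remove.prems by blast
  then show ?case using m by (intro HOL.exI[of _ "m # xs"]) auto
qed simp

lemma sorted_wrt_lex_less_distinct: "sorted_wrt lex_less ts \<Longrightarrow> distinct ts"
  by (induction ts) (auto simp: lex_less_irrefl)

lemma lex_sorted_permutation:
  assumes "distinct ts" "\<forall>t\<in>set ts. length t = k"
  obtains ss where "sorted_wrt lex_less ss" "set ss = set ts" "length ss = length ts"
proof -
  obtain ss where ss: "sorted_wrt lex_less ss" "set ss = set ts"
    using finite_total_sorted_wrt[of "set ts" lex_less] assms(2) lex_less_total lex_less_trans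
    by (metis List.finite_set transpI)
  then have "length ss = length ts"
    using assms(1) sorted_wrt_lex_less_distinct distinct_card by metis
  then show ?thesis using ss that by blast
qed

section \<open>Fresh variables, renaming and copies\<close>

lemma fresh_var: "finite A \<Longrightarrow> \<exists>n. Vr s n \<notin> A"
proof -
  assume "finite A"
  then have "finite (Vr s -` A)" by (rule finite_vimageI) (simp add: inj_def)
  then show ?thesis using ex_new_if_finite[of "Vr s -` A"] by auto
qed

lemma fresh_vars: "finite A \<Longrightarrow> \<exists>us. map sortof us = ss \<and> distinct us \<and> set us \<inter> A = {}"
proof (induction ss arbitrary: A)
  case (Cons s ss)
  obtain n where n: "Vr s n \<notin> A" using fresh_var[OF Cons.prems] by blast
  obtain us where us: "map sortof us = ss" "distinct us" "set us \<inter> insert (Vr s n) A = {}"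
    using Cons.IH[of "insert (Vr s n) A"] Cons.prems by blast
  show ?case using n us by (intro HOL.exI[of _ "Vr s n # us"]) auto
qed simp

lemma fresh_copies:
  "finite A \<Longrightarrow> \<exists>Ys. length Ys = n \<and> (\<forall>Y\<in>set Ys. map sortof Y = ss)
     \<and> distinct (concat Ys) \<and> set (concat Ys) \<inter> A = {}"
proof (induction n arbitrary: A)
  case (Suc n)
  obtain us where us: "map sortof us = ss" "distinct us" "set us \<inter> A = {}"
    using fresh_vars[OF Suc.prems] by blast
  obtain Ys where Ys: "length Ys = n" "\<forall>Y\<in>set Ys. map sortof Y = ss" "distinct (concat Ys)"
    "set (concat Ys) \<inter> (A \<union> set us) = {}"
    using Suc.IH[of "A \<union> set us"] Suc.prems by blast
  show ?case using us Ys by (intro HOL.exI[of _ "us # Ys"]) auto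
qed simp

lemma finite_allvars: "finite (allvars F)"
proof -
  have "finite (fvt t)" for t by (induction t) auto
  then show ?thesis by (induction F) auto
qed

lemma allvars_subst_Var: "allvars (subst x (Var y) F) \<subseteq> allvars F \<union> {y}"
proof -
  have t: "fvt (substt x (Var y) u) \<subseteq> fvt u \<union> {y}" for u by (induction u) auto
  show ?thesis
  proof (induction F)
    case (Pred p ts) then show ?case using t by fastforce
  next
    case (Cmp c a b) then show ?case using t[of a] t[of b] by auto
  next
    case (Agg k X V F ts) then show ?case using t by fastforce
  qed auto
qed

lemma tsub_substt_Var: "y \<noteq> x \<Longrightarrow> tsub s (substt x (Var y) u) = tsub (s(x := s y)) u"
  by (induction u) auto

lemma fsub_subst_Var:
  "y \<noteq> x \<Longrightarrow> y \<notin> allvars F \<Longrightarrow> fsub s (subst x (Var y) F) = fsub (s(x := s y)) F"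
proof (induction F arbitrary: s)
  case (Ex z G)
  show ?case
  proof (cases "z = x")
    case False
    have "fsub (s(z := Var z)) (subst x (Var y) G) = fsub ((s(z := Var z))(x := (s(z := Var z)) y)) G"
      by (rule Ex.IH) (use Ex.prems in auto)
    also have "(s(z := Var z))(x := (s(z := Var z)) y) = (s(x := s y))(z := Var z)"
      using Ex.prems False by (auto simp: fun_upd_twist)
    finally show ?thesis using False by (simp only: subst.simps fsub.simps if_False)
  qed (simp only: subst.simps fsub.simps if_True fun_upd_upd simp_thms(6))
next
  case (All z G)
  show ?case
  proof (cases "z = x")
    case False
    have "fsub (s(z := Var z)) (subst x (Var y) G) = fsub ((s(z := Var z))(x := (s(z := Var z)) y)) G"
      by (rule All.IH) (use All.prems in auto)
    also have "(s(z := Var z))(x := (s(z := Var z)) y) = (s(x := s y))(z := Var z)"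
      using All.prems False by (auto simp: fun_upd_twist)
    finally show ?thesis using False by (simp only: subst.simps fsub.simps if_False)
  qed (simp only: subst.simps fsub.simps if_True fun_upd_upd simp_thms(6))
next
  case (And F G) then show ?case by (metis Un_iff allvars.simps(4) fsub.simps(4) subst.simps(4))
next
  case (Or F G) then show ?case by (metis Un_iff allvars.simps(5) fsub.simps(5) subst.simps(5))
next
  case (Imp F G) then show ?case by (metis Un_iff allvars.simps(6) fsub.simps(6) subst.simps(6))
qed (simp_all add: tsub_substt_Var)

lemma fsub_rename_foldl:
  "distinct (map fst ps) \<Longrightarrow> distinct (map snd ps) \<Longrightarrow> set (map snd ps) \<inter> (set (map fst ps) \<union> allvars F) = {}
   \<Longrightarrow> fsub s (foldl (\<lambda>G (x, y). subst x (Var y) G) F ps)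
       = fsub (\<lambda>z. case map_of ps z of Some y \<Rightarrow> s y | None \<Rightarrow> s z) F"
proof (induction ps arbitrary: F)
  case (Cons p ps)
  obtain x y where p: "p = (x, y)" by (cases p)
  let ?F = "subst x (Var y) F"
  let ?s = "\<lambda>z. case map_of ps z of Some y \<Rightarrow> s y | None \<Rightarrow> s z"
  have "set (map snd ps) \<inter> allvars ?F = {}"
    using allvars_subst_Var[of x y F] Cons.prems p by (simp, blast)
  then have "fsub s (foldl (\<lambda>G (x, y). subst x (Var y) G) ?F ps) = fsub ?s ?F"
    by (intro Cons.IH) (use Cons.prems in auto)
  also have "... = fsub (?s(x := ?s y)) F"
    by (rule fsub_subst_Var) (use Cons.prems p in auto)
  also have "?s(x := ?s y) = (\<lambda>z. case map_of (p # ps) z of Some y \<Rightarrow> s y | None \<Rightarrow> s z)"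
  proof -
    have "map_of ps y = None" using Cons.prems(3) p by (auto simp: map_of_eq_None_iff)
    then show ?thesis using p by (auto simp: fun_eq_iff)
  qed
  finally show ?case using p by simp
qed simp

lemma fsub_rename:
  assumes "distinct X" "length W = length X" "distinct W" "set W \<inter> (set X \<union> allvars F) = {}"
  shows "fsub s (rename X W F) = fsub (\<lambda>z. case map_of (zip X W) z of Some y \<Rightarrow> s y | None \<Rightarrow> s z) F"
  unfolding rename_def by (rule fsub_rename_foldl) (use assms in auto)

lemma wf_foldl_subst_Var:
  "\<forall>(x, y)\<in>set ps. sortof y = sortof x \<Longrightarrow> wf G \<Longrightarrow> wf (foldl (\<lambda>G (x, y). subst x (Var y) G) G ps)"
proof (induction ps arbitrary: G)
  case (Cons p ps)
  obtain x y where p: "p = (x, y)" by (cases p)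
  have "wf (subst x (Var y) G)" using Cons.prems p has_sort_Var[of y] by (auto intro: wf_subst)
  then show ?case using Cons p by simp
qed simp

lemma wf_rename: "map sortof W = map sortof X \<Longrightarrow> wf F \<Longrightarrow> wf (rename X W F)"
  unfolding rename_def
  by (rule wf_foldl_subst_Var) (auto simp: set_zip, metis length_map nth_map)

lemma fv_rename:
  assumes "distinct X" "length W = length X" "distinct W" "set W \<inter> (set X \<union> allvars F) = {}"
  shows "fv (rename X W F) \<subseteq> set W \<union> (fv F - set X)"
proof -
  let ?s = "\<lambda>z. case map_of (zip X W) z of Some y \<Rightarrow> Var y | None \<Rightarrow> Var z"
  have "rename X W F = fsub ?s F"
    using fsub_rename[OF assms, of Var] by (simp add: fsub_Var)
  then have "fv (rename X W F) \<subseteq> (\<Union>z\<in>fv F. fvt (?s z))"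
    using fv_fsub by metis
  also have "... \<subseteq> set W \<union> (fv F - set X)"
    using assms(2) by (auto split: option.splits dest!: map_of_SomeD set_zip_rightD)
  finally show ?thesis .
qed

fun split_like :: "'b list list \<Rightarrow> 'a list \<Rightarrow> 'a list list" where
  "split_like [] ps = []"
| "split_like (Y # Ys) ps = take (length Y) ps # split_like Ys (drop (length Y) ps)"

lemma split_like_concat: "map length ts = map length Ys \<Longrightarrow> split_like Ys (concat ts) = ts"
proof (induction Ys arbitrary: ts)
  case (Cons Y Ys)
  then show ?case by (cases ts) auto
qed simp

lemma length_split_like: "length (split_like Ys ps) = length Ys"
  by (induction Ys arbitrary: ps) auto

lemma assignment_append_iff:
  "assignment (xs @ ys) ps = (assignment xs (take (length xs) ps) \<and> assignment ys (drop (length xs) ps))"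
proof
  assume "assignment (xs @ ys) ps"
  then have "list_all2 (\<lambda>s p. p \<in> dom_of s) (map sortof xs @ map sortof ys) ps"
    by (simp add: assignment_def)
  from list_all2_takeI[OF this, of "length xs"] list_all2_dropI[OF this, of "length xs"]
  show "assignment xs (take (length xs) ps) \<and> assignment ys (drop (length xs) ps)"
    by (simp add: assignment_def)
qed (metis append_take_drop_id assignment_append)

lemma assignment_split_like:
  "assignment (concat Ys) ps \<Longrightarrow> i < length Ys \<Longrightarrow> assignment (Ys ! i) (split_like Ys ps ! i)"
proof (induction Ys arbitrary: ps i)
  case (Cons Y Ys)
  then show ?case by (cases i) (auto simp: assignment_append_iff)
qed simp

lemma assignment_concat: "list_all2 assignment Ys ts \<Longrightarrow> assignment (concat Ys) (concat ts)"
  by (induction Ys ts rule: list_all2_induct) (auto simp: assignment_Nil assignment_append)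

lemma assignment_same_sorts: "map sortof Y = map sortof X \<Longrightarrow> assignment Y t = assignment X t"
  by (simp add: assignment_def)

lemma map_inst_concat:
  "distinct (concat Ys) \<Longrightarrow> length ps = length (concat Ys)
   \<Longrightarrow> map (map (inst (concat Ys) ps)) Ys = map (map Pc) (split_like Ys ps)"
proof (induction Ys arbitrary: ps)
  case (Cons Y Ys)
  let ?p1 = "take (length Y) ps" and ?p2 = "drop (length Y) ps"
  have l1: "length ?p1 = length Y" using Cons.prems(2) by simp
  have d: "distinct (Y @ concat Ys)" using Cons.prems(1) by simp
  have "map (inst (concat (Y # Ys)) ps) Y = map Pc ?p1"
    using map_inst_append_left[OF d l1, of ?p2] by simp
  moreover have "inst (concat (Y # Ys)) ps z = inst (concat Ys) ?p2 z" if "z \<in> set (concat Ys)" for z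
  proof -
    have "z \<notin> set Y" using d that by auto
    then show ?thesis using inst_append[OF l1, of "concat Ys" ?p2 z] by simp
  qed
  then have "map (map (inst (concat (Y # Ys)) ps)) Ys = map (map (inst (concat Ys) ?p2)) Ys"
    by (auto intro!: map_cong)
  moreover have "map (map (inst (concat Ys) ?p2)) Ys = map (map Pc) (split_like Ys ?p2)"
    by (rule Cons.IH) (use Cons.prems in auto)
  ultimately show ?case by simp
qed simp

lemma set_pairs: "set (pairs xs) = {(xs ! i, xs ! j) | i j. i < j \<and> j < length xs}"
  unfolding pairs_def by force

definition eq_tms :: "tm list \<Rightarrow> tm list \<Rightarrow> fm" where
  "eq_tms as bs = Conj (map (\<lambda>(a, b). Cmp Eq a b) (zip as bs))"

definition ne_tms :: "tm list \<Rightarrow> tm list \<Rightarrow> fm" where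
  "ne_tms as bs = Disj (map (\<lambda>(a, b). Cmp Ne a b) (zip as bs))"

lemma fsub_tup_eq: "fsub s (tup_eq Y Z) = eq_tms (map s Y) (map s Z)"
  unfolding tup_eq_def eq_tms_def fsub_Conj by (simp add: zip_map_map case_prod_beta comp_def)

lemma fsub_tup_ne: "fsub s (tup_ne Y Z) = ne_tms (map s Y) (map s Z)"
  unfolding tup_ne_def ne_tms_def fsub_Disj by (simp add: zip_map_map case_prod_beta comp_def)

lemma eq_tms_Pc:
  "length a = length b \<Longrightarrow> closed_arith (eq_tms (map Pc a) (map Pc b)) \<and> (holds e (eq_tms (map Pc a) (map Pc b)) = (a = b))"
  by (induction a b rule: list_induct2) (auto simp: eq_tms_def Conj_def Top_def closed_arith_def)

lemma ne_tms_Pc: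
  "length a = length b \<Longrightarrow> closed_arith (ne_tms (map Pc a) (map Pc b)) \<and> (holds e (ne_tms (map Pc a) (map Pc b)) = (a \<noteq> b))"
  by (induction a b rule: list_induct2) (auto simp: ne_tms_def Disj_def closed_arith_def)

lemma wf_tup: "wf (tup_ne W Z) \<and> wf (tup_eq W Z)"
  unfolding tup_ne_def tup_eq_def by (auto intro!: wf_Disj wf_Conj)

lemma fv_tup: "fv (tup_ne W Z) \<subseteq> set W \<union> set Z \<and> fv (tup_eq W Z) \<subseteq> set W \<union> set Z"
  unfolding tup_ne_def tup_eq_def fv_Conj fv_Disj by (fastforce dest: set_zip_leftD set_zip_rightD)

lemma pairs_map: "pairs (map f xs) = map (\<lambda>(a, b). (f a, f b)) (pairs xs)"
  unfolding pairs_def by (simp add: map_concat comp_def) (intro arg_cong[where f = concat] map_cong; simp)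

definition distinct_fm :: "pc list list \<Rightarrow> fm" where
  "distinct_fm ts = Conj (map (\<lambda>(t, u). ne_tms (map Pc t) (map Pc u)) (pairs ts))"

definition some_equal_fm :: "pc list list \<Rightarrow> fm" where
  "some_equal_fm ts = Disj (map (\<lambda>(t, u). eq_tms (map Pc t) (map Pc u)) (pairs ts))"

lemma distinct_conv_pairs: "distinct xs = (\<forall>(a, b)\<in>set (pairs xs). a \<noteq> b)"
proof -
  have "distinct xs = (\<forall>i j. i < j \<longrightarrow> j < length xs \<longrightarrow> xs ! i \<noteq> xs ! j)"
    unfolding distinct_conv_nth
  proof safe
    fix i j assume "\<forall>i j. i < j \<longrightarrow> j < length xs \<longrightarrow> xs ! i \<noteq> xs ! j"
      "i < length xs" "j < length xs" "i \<noteq> j" "xs ! i = xs ! j"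
    then show False by (metis linorder_neqE_nat)
  qed auto
  then show ?thesis unfolding set_pairs by blast
qed

lemma distinct_fm:
  assumes "\<forall>t\<in>set ts. length t = k"
  shows "closed_arith (distinct_fm ts)" "holds e (distinct_fm ts) = distinct ts"
proof -
  have "closed_arith A \<and> (holds e A = (a \<noteq> b))"
    if "A = ne_tms (map Pc a) (map Pc b)" "(a, b) \<in> set (pairs ts)" for A a b
    using that ne_tms_Pc[of a b] assms by (auto simp: set_pairs)
  then show "closed_arith (distinct_fm ts)" "holds e (distinct_fm ts) = distinct ts"
    unfolding distinct_fm_def distinct_conv_pairs by (auto simp: closed_arith_Conj holds_Conj)
qed

lemma some_equal_fm:
  assumes "\<forall>t\<in>set ts. length t = k"
  shows "closed_arith (some_equal_fm ts)" "holds e (some_equal_fm ts) = (\<not> distinct ts)"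
proof -
  have h: "closed_arith (eq_tms (map Pc a) (map Pc b)) \<and> (holds e (eq_tms (map Pc a) (map Pc b)) = (a = b))"
    if "(a, b) \<in> set (pairs ts)" for a b
    using that eq_tms_Pc[of a b] assms by (auto simp: set_pairs)
  then show "closed_arith (some_equal_fm ts)"
    unfolding some_equal_fm_def by (auto simp: closed_arith_Disj)
  show "holds e (some_equal_fm ts) = (\<not> distinct ts)"
    unfolding some_equal_fm_def distinct_conv_pairs holds_Disj using h by fastforce
qed

section \<open>The axioms D1 are derivable from D0 and Defs\<close>

definition Ax_D0 :: "fm set" where
  "Ax_D0 = HTax \<union> Std \<union> Defs_ax \<union> D0"

abbreviation ndD0 :: "fm set \<Rightarrow> fm \<Rightarrow> bool" where
  "ndD0 \<equiv> nd True Ax_D0"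

lemma Std_subset_Ax_D0: "Std \<subseteq> Ax_D0"
  by (auto simp: Ax_D0_def)

lemma nd_D0: "A \<in> D0 \<Longrightarrow> ndD0 \<Gamma> A"
  by (rule nd.axiom) (simp add: Ax_D0_def)

lemma nd_Defs_ax: "A \<in> Defs_ax \<Longrightarrow> ndD0 \<Gamma> A"
  by (rule nd.axiom) (simp add: Ax_D0_def)

locale D1_instance =
  fixes X V :: "var list" and F :: fm and Y N :: var
  assumes D1_ok: "D1_ok X V F Y N"
begin

lemma ok: "distinct (X @ V)" "wf F" "fv F \<subseteq> set (X @ V)" "sortof Y = General" "Y \<notin> set (X @ V)"
  "sortof N = Integer" "N \<notin> set (X @ V @ [Y])" "agg_ok X V F"
  using D1_ok by (auto simp: D1_ok_def agg_ok_def)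

text \<open>A fixed choice of the tuple \<open>U\<close> in the recursion axiom of \<open>D0\<close>.\<close>
definition U :: "var list" where
  "U = (SOME us. map sortof us = map sortof X \<and> distinct us \<and> set us \<inter> set (X @ V @ [N]) = {})"

lemma U: "map sortof U = map sortof X" "distinct U" "set U \<inter> set (X @ V @ [N]) = {}"
proof -
  have "\<exists>us. map sortof us = map sortof X \<and> distinct us \<and> set us \<inter> set (X @ V @ [N]) = {}"
    by (rule fresh_vars) simp
  then have "map sortof U = map sortof X \<and> distinct U \<and> set U \<inter> set (X @ V @ [N]) = {}"
    unfolding U_def by (rule someI_ex)
  then show "map sortof U = map sortof X" "distinct U" "set U \<inter> set (X @ V @ [N]) = {}" by auto
qed

lemma D0_ok_U: "D0_ok X V F N U"
  using ok U by (auto simp: D0_ok_def)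

lemma assignment_U: "assignment U u = assignment X u"
  by (rule assignment_same_sorts[OF U(1)])

definition F_at :: "pc list \<Rightarrow> pc list \<Rightarrow> fm" where
  "F_at t v = fsub (inst (X @ V) (t @ v)) F"

definition Start_at :: "pc list \<Rightarrow> pc list \<Rightarrow> tm \<Rightarrow> fm" where
  "Start_at t v m = Agg Start X V F (map Pc t @ map Pc v @ [m])"

definition witnesses :: "fm set \<Rightarrow> pc list \<Rightarrow> pc list list \<Rightarrow> bool" where
  "witnesses \<Gamma> v ts = (\<forall>t\<in>set ts. assignment X t \<and> ndD0 \<Gamma> (F_at t v))"

lemma Start_at_closed:
  assumes "assignment X t" "assignment V v"
  shows "fv (Start_at t v (Pc (Num m))) = {} \<and> wf (Start_at t v (Pc (Num m)))"
proof -
  have "list_all2 has_sort (map Pc (t @ v) @ [Pc (Num m)]) (map sortof (X @ V) @ [Integer])"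
    by (intro list_all2_appendI list_all2_has_sort_assignment assignment_append assms) auto
  then show ?thesis unfolding Start_at_def using ok by auto
qed

lemma witnesses_mono: "witnesses \<Gamma> v ts \<Longrightarrow> \<Gamma> \<subseteq> \<Gamma>' \<Longrightarrow> closed_set \<Gamma>' \<Longrightarrow> witnesses \<Gamma>' v ts"
  unfolding witnesses_def using nd_weaken_closed by blast

lemma inst_XVN:
  assumes "assignment X t" "assignment V v"
  shows "map (inst (X @ V @ [N]) (t @ v @ [p])) X = map Pc t"
    "map (inst (X @ V @ [N]) (t @ v @ [p])) V = map Pc v"
    "inst (X @ V @ [N]) (t @ v @ [p]) N = Pc p"
    "z \<in> set (X @ V) \<Longrightarrow> inst (X @ V @ [N]) (t @ v @ [p]) z = inst (X @ V) (t @ v) z"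
    "z \<in> set U \<Longrightarrow> inst (X @ V @ [N]) (t @ v @ [p]) z = Var z"
proof -
  have l: "length t = length X" "length v = length V" using assms by (auto simp: assignment_length)
  have d: "distinct ((X @ V) @ [N])" using ok by auto
  show "map (inst (X @ V @ [N]) (t @ v @ [p])) X = map Pc t"
    by (rule map_inst_append_left) (use d l in auto)
  have "map (inst ((X @ V) @ [N]) ((t @ v) @ [p])) (X @ V) = map Pc (t @ v)"
    by (rule map_inst_append_left) (use d l in auto)
  then show "map (inst (X @ V @ [N]) (t @ v @ [p])) V = map Pc v"
    using l by (simp add: append_eq_append_conv)
  have "map (inst ((X @ V) @ [N]) ((t @ v) @ [p])) [N] = map Pc [p]"
    by (rule map_inst_append_right) (use d l in auto)
  then show "inst (X @ V @ [N]) (t @ v @ [p]) N = Pc p" by simp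
  show "z \<in> set (X @ V) \<Longrightarrow> inst (X @ V @ [N]) (t @ v @ [p]) z = inst (X @ V) (t @ v) z"
    using inst_append[of "t @ v" "X @ V" "[N]" "[p]" z] l by simp
  show "z \<in> set U \<Longrightarrow> inst (X @ V @ [N]) (t @ v @ [p]) z = Var z"
    by (rule inst_notin) (use U(3) in auto)
qed

lemma assignment_XVN: "assignment X t \<Longrightarrow> assignment V v \<Longrightarrow> assignment (X @ V @ [N]) (t @ v @ [Num m])"
  by (intro assignment_append) (auto simp: assignment_def ok)

lemma nd_Start_at_nonpos:
  assumes "assignment X t" "assignment V v" "m \<le> 0"
  shows "ndD0 \<Gamma> (Start_at t v (Pc (Num m)))"
proof -
  let ?A = "AllL (X @ V @ [N]) (Imp (Cmp Le (Var N) (Pc (Num 0))) (StartA X V F X (Var N)))"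
  have "ndD0 \<Gamma> ?A" by (rule nd_D0) (use D0_ok_U in \<open>auto simp: D0_def\<close>)
  then have "ndD0 \<Gamma> (fsub (inst (X @ V @ [N]) (t @ v @ [Num m]))
      (Imp (Cmp Le (Var N) (Pc (Num 0))) (StartA X V F X (Var N))))"
    by (rule nd_AllL_E) (use ok assignment_XVN[OF assms(1,2)] in auto)
  then have "ndD0 \<Gamma> (Imp (Cmp Le (Pc (Num m)) (Pc (Num 0))) (Start_at t v (Pc (Num m))))"
    using inst_XVN[OF assms(1,2), where p = "Num m"] by (simp add: StartA_def Start_at_def comp_def)
  moreover have "ndD0 \<Gamma> (Cmp Le (Pc (Num m)) (Pc (Num 0)))"
    by (rule nd_Std[OF Std_subset_Ax_D0]) (use assms(3) in auto)
  ultimately show ?thesis by (rule nd.impE)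
qed

lemma nd_Start_at_one_iff:
  assumes "assignment X t" "assignment V v"
  shows "ndD0 \<Gamma> (Iff (Start_at t v (Pc (Num 1))) (F_at t v))"
proof -
  let ?A = "AllL (X @ V) (Iff (StartA X V F X (Pc (Num 1))) F)"
  have "ndD0 \<Gamma> ?A" by (rule nd_D0) (use D0_ok_U in \<open>auto simp: D0_def\<close>)
  then have "ndD0 \<Gamma> (fsub (inst (X @ V) (t @ v)) (Iff (StartA X V F X (Pc (Num 1))) F))"
    by (rule nd_AllL_E) (use ok assignment_append[OF assms] in auto)
  moreover have "map (inst (X @ V) (t @ v)) (X @ V) = map Pc (t @ v)"
    by (rule map_inst) (use ok assms in \<open>auto simp: assignment_length\<close>)
  ultimately show ?thesis
    using assignment_length[OF assms(1)]
    by (simp add: StartA_def Start_at_def F_at_def Iff_def comp_def append_eq_append_conv)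
qed

text \<open>The matrix of \<open>\<exists>U (X < U \<and> Start(U, V, N))\<close> in the recursion axiom of \<open>D0\<close>,
  at \<open>X = t\<close>, \<open>V = v\<close>, \<open>N = m\<close>.\<close>
definition Start_above :: "pc list \<Rightarrow> pc list \<Rightarrow> int \<Rightarrow> fm" where
  "Start_above t v m =
     And (lex_fm (map Pc t) (map Var U)) (Agg Start X V F (map Var U @ map Pc v @ [Pc (Num m)]))"

lemma nd_Start_at_succ_iff:
  assumes "assignment X t" "assignment V v" "m > 0"
  shows "ndD0 \<Gamma> (Iff (Start_at t v (Add (Pc (Num m)) (Pc (Num 1))))
                      (And (F_at t v) (ExL U (Start_above t v m))))"
proof -
  let ?B = "Imp (Cmp Gt (Var N) (Pc (Num 0)))
            (Iff (StartA X V F X (Add (Var N) (Pc (Num 1))))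
                 (And F (ExL U (And (lexless X U) (StartA X V F U (Var N))))))"
  let ?s = "inst (X @ V @ [N]) (t @ v @ [Num m])"
  have "ndD0 \<Gamma> (AllL (X @ V @ [N]) ?B)" by (rule nd_D0) (use D0_ok_U in \<open>auto simp: D0_def\<close>)
  then have h: "ndD0 \<Gamma> (fsub ?s ?B)"
    by (rule nd_AllL_E) (use ok assignment_XVN[OF assms(1,2)] in auto)
  note s = inst_XVN[OF assms(1,2), where p = "Num m"]
  have mU: "map ?s U = map Var U" using s(5) by (induction U) auto
  have "fsub ?s (ExL U (And (lexless X U) (StartA X V F U (Var N)))) = ExL U (Start_above t v m)"
    using s(1-3) by (simp add: fsub_ExL s(5) fsub_lexless StartA_def Start_above_def comp_def mU)
  moreover have "fsub ?s F = F_at t v" unfolding F_at_def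
    by (rule fsub_cong) (use ok(3) s(4) in auto)
  ultimately have "ndD0 \<Gamma> (Imp (Cmp Gt (Pc (Num m)) (Pc (Num 0)))
     (Iff (Start_at t v (Add (Pc (Num m)) (Pc (Num 1)))) (And (F_at t v) (ExL U (Start_above t v m)))))"
    using h s(1-3) by (simp add: fsub_Iff StartA_def Start_at_def comp_def)
  moreover have "ndD0 \<Gamma> (Cmp Gt (Pc (Num m)) (Pc (Num 0)))"
    by (rule nd_Std[OF Std_subset_Ax_D0]) (use assms(3) in auto)
  ultimately show ?thesis by (rule nd.impE)
qed

lemma fsub_Start_above:
  "assignment X u \<Longrightarrow> fsub (inst U u) (Start_above t v m) = And (lex_fm (map Pc t) (map Pc u)) (Start_at u v (Pc (Num m)))"
  using map_inst[OF U(2), of u] assignment_length[of X u] U(1)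
  by (simp add: Start_above_def Start_at_def fsub_lex_fm comp_def) (metis length_map)

lemma Start_above_props: "assignment V v \<Longrightarrow> wf (Start_above t v m) \<and> fv (Start_above t v m) \<subseteq> set U"
proof -
  assume v: "assignment V v"
  have "list_all2 has_sort (map Var U) (map sortof X)"
    using list_all2_has_sort_Var[of U] U(1) by simp
  then have "list_all2 has_sort (map Var U @ map Pc v @ [Pc (Num m)]) (map sortof X @ map sortof V @ [Integer])"
    using list_all2_has_sort_assignment[OF v] by (intro list_all2_appendI) auto
  moreover have "wf (lex_fm (map Pc t) (map Var U))" by (rule wf_lex_fm) auto
  ultimately show ?thesis using ok fv_lex_fm[of "map Pc t" "map Var U"] by (auto simp: Start_above_def)
qed

lemma nd_Start_at_Add_iff:
  assumes "assignment X t" "assignment V v"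
  shows "ndD0 \<Gamma> (Start_at t v (Add (Pc (Num m)) (Pc (Num 1)))) = ndD0 \<Gamma> (Start_at t v (Pc (Num (m + 1))))"
proof -
  let ?G = "Agg Start X V F (map Pc t @ map Pc v @ [Var N])"
  have sub: "subst N r ?G = Start_at t v r" for r by (simp add: Start_at_def comp_def)
  have eq: "ndD0 \<Gamma> (Cmp Eq a b)" if "a = Add (Pc (Num m)) (Pc (Num 1)) \<and> b = Pc (Num (m + 1))
      \<or> b = Add (Pc (Num m)) (Pc (Num 1)) \<and> a = Pc (Num (m + 1))" for a b
    by (rule nd_Std[OF Std_subset_Ax_D0]) (use that in \<open>auto simp: closed_arith_def\<close>)
  show ?thesis
    using nd.eqE[OF eq, of _ _ N ?G] ok(6) unfolding sub by (auto simp: free_for_closed)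
qed

lemma nd_Start_at_sorted:
  "sorted_wrt lex_less ts \<Longrightarrow> ts \<noteq> [] \<Longrightarrow> assignment V v \<Longrightarrow> witnesses \<Gamma> v ts
   \<Longrightarrow> ndD0 \<Gamma> (Start_at (hd ts) v (Pc (Num (int (length ts)))))"
proof (induction ts)
  case (Cons t ts)
  have t: "assignment X t" "ndD0 \<Gamma> (F_at t v)" using Cons.prems(4) by (auto simp: witnesses_def)
  show ?case
  proof (cases "ts = []")
    case True
    then show ?thesis using nd_IffD2[OF nd_Start_at_one_iff[OF t(1) Cons.prems(3)] t(2)] by simp
  next
    case False
    then obtain u us where ts: "ts = u # us" by (cases ts) auto
    let ?m = "int (length ts)"
    have u: "assignment X u" using Cons.prems(4) ts by (auto simp: witnesses_def)
    have "ndD0 \<Gamma> (Start_at u v (Pc (Num ?m)))"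
      using Cons.IH Cons.prems False ts by (auto simp: witnesses_def)
    moreover have "ndD0 \<Gamma> (lex_fm (map Pc t) (map Pc u))"
      by (rule nd_Std[OF Std_subset_Ax_D0 closed_arith_lex_fm])
        (use Cons.prems(1) ts in \<open>simp add: holds_lex_fm\<close>)
    ultimately have "ndD0 \<Gamma> (ExL U (Start_above t v ?m))"
      using Start_above_props[OF Cons.prems(3)] U(2) u
      by (intro nd_ExL_I[of _ _ u]) (auto simp: assignment_U fsub_Start_above intro: nd.andI)
    then have "ndD0 \<Gamma> (And (F_at t v) (ExL U (Start_above t v ?m)))" by (rule nd.andI[OF t(2)])
    moreover have "0 < ?m" using ts by simp
    ultimately have "ndD0 \<Gamma> (Start_at t v (Add (Pc (Num ?m)) (Pc (Num 1))))"
      using nd_IffD2[OF nd_Start_at_succ_iff[OF t(1) Cons.prems(3)]] by blast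
    then show ?thesis using nd_Start_at_Add_iff[OF t(1) Cons.prems(3)] by (simp add: add.commute)
  qed
qed simp

lemma obtain_Start_at:
  assumes "distinct ts" "ts \<noteq> []" "assignment V v" "witnesses \<Gamma> v ts"
  obtains t where "assignment X t" "ndD0 \<Gamma> (Start_at t v (Pc (Num (int (length ts)))))"
proof -
  have "\<forall>t\<in>set ts. length t = length X" using assms(4) by (auto simp: witnesses_def assignment_length)
  then obtain ss where ss: "sorted_wrt lex_less ss" "set ss = set ts" "length ss = length ts"
    using lex_sorted_permutation[OF assms(1)] by blast
  have w: "witnesses \<Gamma> v ss" and ne: "ss \<noteq> []" using assms(2,4) ss(2) by (auto simp: witnesses_def)
  then have "ndD0 \<Gamma> (Start_at (hd ss) v (Pc (Num (int (length ss)))))"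
    using nd_Start_at_sorted[OF ss(1) _ assms(3)] by blast
  moreover have "assignment X (hd ss)" using w ne by (simp add: witnesses_def)
  ultimately show ?thesis using that ss(3) by simp
qed

lemma nd_F_at_if_Start_at:
  assumes t: "assignment X t" and v: "assignment V v" and S: "ndD0 \<Gamma> (Start_at t v (Pc (Num k)))"
    and k: "0 < k"
  shows "ndD0 \<Gamma> (F_at t v)"
proof (cases "k = 1")
  case True
  then show ?thesis using S nd_IffD1[OF nd_Start_at_one_iff[OF t v]] by simp
next
  case False
  then have "ndD0 \<Gamma> (Start_at t v (Add (Pc (Num (k - 1))) (Pc (Num 1))))"
    using S nd_Start_at_Add_iff[OF t v, of \<Gamma> "k - 1"] by simp
  moreover have "0 < k - 1" using False k by simp
  ultimately show ?thesis using nd_IffD1[OF nd_Start_at_succ_iff[OF t v]] by (blast intro: nd.andE1)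
qed

lemma nd_Start_at_succ_E:
  assumes C: "closed_set C" and t: "assignment X t" and v: "assignment V v" and m: "0 < m"
    and S: "ndD0 C (Start_at t v (Pc (Num (m + 1))))" and G: "wf G" "fv G = {}"
    and step: "\<And>u. assignment X u \<Longrightarrow> lex_less t u \<Longrightarrow> ndD0 (insert (Start_at u v (Pc (Num m))) C) G"
  shows "ndD0 C G"
proof -
  have "ndD0 C (Start_at t v (Add (Pc (Num m)) (Pc (Num 1))))" using S nd_Start_at_Add_iff[OF t v] by simp
  then have "ndD0 C (ExL U (Start_above t v m))"
    using nd_IffD1[OF nd_Start_at_succ_iff[OF t v m]] by (blast intro: nd.andE2)
  then show ?thesis
  proof (rule nd_ExL_omega_E[OF C _ U(2)])
    show "fv (Start_above t v m) \<subseteq> set U" "wf (Start_above t v m)" using Start_above_props[OF v] by auto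
    fix u assume "assignment U u"
    then have u: "assignment X u" by (simp add: assignment_U)
    let ?S = "Start_at u v (Pc (Num m))"
    let ?H = "And (lex_fm (map Pc t) (map Pc u)) ?S"
    have "ndD0 (insert ?H C) G"
    proof (cases "lex_less t u")
      case True
      have "fv ?H = {}" using closed_arith_lex_fm[of t u] Start_at_closed[OF u v] by (auto simp: closed_arith_def)
      then have "ndD0 (insert ?H (insert ?S C)) G" by (rule nd_weaken_insert[OF step[OF u True]])
      then have "ndD0 (insert ?S (insert ?H C)) G" by (simp only: insert_commute)
      then show ?thesis using Start_at_closed[OF u v] by (blast intro: nd_cut nd.andE2[OF nd_hyp_insert])
    next
      case False
      have "ndD0 (insert ?H C) Bot"
        by (rule nd_Std_Bot[OF Std_subset_Ax_D0 closed_arith_lex_fm _ nd.andE1[OF nd_hyp_insert]])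
          (simp add: holds_lex_fm False)
      then show ?thesis using G(1) by (rule nd.botE)
    qed
    then show "ndD0 (insert (fsub (inst U u) (Start_above t v m)) C) G" by (simp add: fsub_Start_above[OF u])
  qed (use G in auto)
qed

lemma nd_Start_at_E:
  "closed_set C \<Longrightarrow> assignment X t \<Longrightarrow> assignment V v \<Longrightarrow> ndD0 C (Start_at t v (Pc (Num (int m))))
   \<Longrightarrow> m \<ge> 1 \<Longrightarrow> wf G \<Longrightarrow> fv G = {}
   \<Longrightarrow> (\<And>ts \<Gamma>. C \<subseteq> \<Gamma> \<Longrightarrow> closed_set \<Gamma> \<Longrightarrow> sorted_wrt lex_less (t # ts) \<Longrightarrow> length ts + 1 = m
         \<Longrightarrow> witnesses \<Gamma> v (t # ts) \<Longrightarrow> ndD0 \<Gamma> G)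
   \<Longrightarrow> ndD0 C G"
proof (induction m arbitrary: t C)
  case (Suc m)
  note C = Suc.prems(1) and t = Suc.prems(2) and v = Suc.prems(3) and S = Suc.prems(4)
    and G = Suc.prems(6,7) and chains = Suc.prems(8)
  have F: "ndD0 C (F_at t v)" by (rule nd_F_at_if_Start_at[OF t v S]) simp
  show ?case
  proof (cases "m = 0")
    case True
    then show ?thesis using chains[of C "[]"] C t F by (simp add: witnesses_def)
  next
    case False
    show ?thesis
    proof (rule nd_Start_at_succ_E[OF C t v _ _ G])
      show "0 < int m" "ndD0 C (Start_at t v (Pc (Num (int m + 1))))" using False S by (simp_all add: add.commute)
      fix u assume u: "assignment X u" and tu: "lex_less t u"
      let ?C = "insert (Start_at u v (Pc (Num (int m)))) C"
      show "ndD0 ?C G"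
      proof (rule Suc.IH[OF _ u v nd_hyp_insert])
        show "closed_set ?C" using C Start_at_closed[OF u v] by (simp add: closed_set_insert)
        fix ts \<Gamma> assume \<Gamma>: "?C \<subseteq> \<Gamma>" "closed_set \<Gamma>" and ts: "sorted_wrt lex_less (u # ts)"
          "length ts + 1 = m" "witnesses \<Gamma> v (u # ts)"
        have "witnesses \<Gamma> v [t]" using witnesses_mono[of C v "[t]" \<Gamma>] F \<Gamma> t by (auto simp: witnesses_def)
        moreover have "sorted_wrt lex_less (t # u # ts)" using ts(1) tu lex_less_trans by auto
        ultimately show "ndD0 \<Gamma> G"
          using chains[of \<Gamma> "u # ts"] \<Gamma> ts by (auto simp: witnesses_def)
      qed (use False G in auto)
    qed
  qed
qed simp

definition Atleast_at :: "pc list \<Rightarrow> pc \<Rightarrow> fm" where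
  "Atleast_at v r = Agg Atleast X V F (map Pc v @ [Pc r])"

definition Atmost_at :: "pc list \<Rightarrow> pc \<Rightarrow> fm" where
  "Atmost_at v r = Agg Atmost X V F (map Pc v @ [Pc r])"

lemma Atleast_Atmost_at_closed:
  assumes "assignment V v"
  shows "fv (Atleast_at v r) = {} \<and> wf (Atleast_at v r)" "fv (Atmost_at v r) = {} \<and> wf (Atmost_at v r)"
proof -
  have "list_all2 has_sort (map Pc v @ [Pc r]) (map sortof V @ [General])"
    using list_all2_has_sort_assignment[OF assms] by (intro list_all2_appendI) auto
  then show "fv (Atleast_at v r) = {} \<and> wf (Atleast_at v r)" "fv (Atmost_at v r) = {} \<and> wf (Atmost_at v r)"
    using ok by (auto simp: Atleast_at_def Atmost_at_def)
qed

definition copies :: "nat \<Rightarrow> var list list" where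
  "copies k = (SOME Ys. copies_ok X V F Ys k)"

lemma copies_ok: "copies_ok X V F (copies k) k"
proof -
  have "\<exists>Ys. copies_ok X V F Ys k"
    using fresh_copies[of "set X \<union> set V \<union> allvars F" k "map sortof X"]
    by (simp add: finite_allvars copies_ok_def)
  then show ?thesis unfolding copies_def by (rule someI_ex)
qed

lemma nd_Atleast_at_iff:
  assumes "assignment V v"
  shows "ndD0 \<Gamma> (Iff (Atleast_at v r) (fsub (inst V v) (exists_ge X F (copies (cnt_ge r)) r)))"
proof -
  let ?B = "Iff (Agg Atleast X V F (map Var V @ [Pc r])) (exists_ge X F (copies (cnt_ge r)) r)"
  have "AllL V ?B \<in> Defs_ax" unfolding Defs_ax_def using ok(8) copies_ok by blast
  then have "ndD0 \<Gamma> (fsub (inst V v) ?B)" by (intro nd_AllL_E[OF nd_Defs_ax]) (use ok assms in auto)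
  moreover have "map (inst V v) V = map Pc v" by (rule map_inst) (use ok assms in \<open>auto simp: assignment_length\<close>)
  ultimately show ?thesis by (simp add: fsub_Iff Atleast_at_def comp_def)
qed

lemma nd_Atmost_at_iff:
  assumes "assignment V v"
  shows "ndD0 \<Gamma> (Iff (Atmost_at v r) (fsub (inst V v) (exists_le X F (copies (cnt_le r)) r)))"
proof -
  let ?B = "Iff (Agg Atmost X V F (map Var V @ [Pc r])) (exists_le X F (copies (cnt_le r)) r)"
  have "AllL V ?B \<in> Defs_ax" unfolding Defs_ax_def using ok(8) copies_ok by blast
  then have "ndD0 \<Gamma> (fsub (inst V v) ?B)" by (intro nd_AllL_E[OF nd_Defs_ax]) (use ok assms in auto)
  moreover have "map (inst V v) V = map Pc v" by (rule map_inst) (use ok assms in \<open>auto simp: assignment_length\<close>)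
  ultimately show ?thesis by (simp add: fsub_Iff Atmost_at_def comp_def)
qed

text \<open>The matrices of \<open>exists_ge\<close> and \<open>exists_le\<close> for a positive count.\<close>
definition ge_body :: "var list list \<Rightarrow> fm" where
  "ge_body Ys = And (Conj (map (\<lambda>Y. rename X Y F) Ys)) (Conj (map (\<lambda>(Y, Z). tup_ne Y Z) (pairs Ys)))"

definition le_body :: "var list list \<Rightarrow> fm" where
  "le_body Ys = Imp (Conj (map (\<lambda>Y. rename X Y F) Ys)) (Disj (map (\<lambda>(Y, Z). tup_eq Y Z) (pairs Ys)))"

lemma fsub_exists_ge_le:
  assumes "copies_ok X V F Ys k"
  shows "0 < n \<Longrightarrow> fsub (inst V v) (exists_ge X F Ys (Num n)) = ExL (concat Ys) (fsub (inst V v) (ge_body Ys))"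
    "0 \<le> n \<Longrightarrow> fsub (inst V v) (exists_le X F Ys (Num n)) = AllL (concat Ys) (fsub (inst V v) (le_body Ys))"
proof -
  have "z \<in> set (concat Ys) \<Longrightarrow> inst V v z = Var z" for z
    by (rule inst_notin) (use assms in \<open>auto simp: copies_ok_def\<close>)
  note fixed = this
  show "0 < n \<Longrightarrow> fsub (inst V v) (exists_ge X F Ys (Num n)) = ExL (concat Ys) (fsub (inst V v) (ge_body Ys))"
    using fsub_ExL[of "concat Ys" "inst V v" "ge_body Ys"] fixed by (simp add: ge_body_def)
  show "0 \<le> n \<Longrightarrow> fsub (inst V v) (exists_le X F Ys (Num n)) = AllL (concat Ys) (fsub (inst V v) (le_body Ys))"
    using fsub_AllL[of "concat Ys" "inst V v" "le_body Ys"] fixed by (simp add: le_body_def)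
qed

lemma fsub_rename_eq_F_at:
  assumes W: "distinct W" "length W = length X" "set W \<inter> (set X \<union> allvars F) = {}"
    and s: "map s W = map Pc t" "\<And>z. z \<in> set V \<Longrightarrow> s z = inst V v z"
    and l: "length t = length X" "length v = length V"
  shows "fsub s (rename X W F) = F_at t v"
proof -
  have "fsub s (rename X W F) = fsub (\<lambda>z. case map_of (zip X W) z of Some y \<Rightarrow> s y | None \<Rightarrow> s z) F"
    by (rule fsub_rename) (use ok(1) W in auto)
  also have "... = F_at t v" unfolding F_at_def
  proof (rule fsub_cong)
    fix z assume z: "z \<in> fv F"
    show "(case map_of (zip X W) z of Some y \<Rightarrow> s y | None \<Rightarrow> s z) = inst (X @ V) (t @ v) z"
    proof (cases "z \<in> set X")
      case True
      then obtain j where j: "j < length X" "z = X ! j" by (metis in_set_conv_nth)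
      have "map_of (zip X W) z = Some (W ! j)" using j W(2) ok(1) by (simp add: map_of_zip_nth)
      moreover have "s (W ! j) = Pc (t ! j)" using s(1) j W(2) l(1) by (metis nth_map)
      moreover have "inst (X @ V) (t @ v) z = Pc (t ! j)"
        using inst_nth[of "X @ V" "t @ v" j] ok(1) l j by (simp add: nth_append)
      ultimately show ?thesis by simp
    next
      case False
      then have "map_of (zip X W) z = None" using W(2) by simp
      then show ?thesis using False z ok(3) s(2) l by (auto simp: inst_append)
    qed
  qed
  finally show ?thesis .
qed

lemma copy_values:
  assumes c: "copies_ok X V F Ys k" and v: "assignment V v" and ps: "assignment (concat Ys) ps"
    and i: "i < length Ys"
  shows "map (inst (V @ concat Ys) (v @ ps)) (Ys ! i) = map Pc (split_like Ys ps ! i)"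
    "fsub (inst (V @ concat Ys) (v @ ps)) (rename X (Ys ! i) F) = F_at (split_like Ys ps ! i) v"
    "assignment X (split_like Ys ps ! i)"
proof -
  let ?s = "inst (V @ concat Ys) (v @ ps)" and ?t = "split_like Ys ps ! i"
  have lv: "length v = length V" using v by (simp add: assignment_length)
  have dc: "distinct (concat Ys)" and disj: "set (concat Ys) \<inter> (set X \<union> set V \<union> allvars F) = {}"
    and Yi: "map sortof (Ys ! i) = map sortof X" using c i by (auto simp: copies_ok_def)
  have "map (inst (concat Ys) ps) (Ys ! i) = map Pc ?t"
    using map_inst_concat[OF dc assignment_length[OF ps]] i length_split_like[of Ys ps] by (metis nth_map)
  moreover have "map ?s (Ys ! i) = map (inst (concat Ys) ps) (Ys ! i)"
  proof (rule map_cong[OF refl])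
    fix z assume "z \<in> set (Ys ! i)"
    then have "z \<notin> set V" using disj nth_mem[OF i] by auto
    then show "?s z = inst (concat Ys) ps z" by (simp add: inst_append lv)
  qed
  ultimately show m: "map ?s (Ys ! i) = map Pc ?t" by simp
  show t: "assignment X ?t"
    using assignment_split_like[OF ps i] assignment_same_sorts[OF Yi] by simp
  show "fsub ?s (rename X (Ys ! i) F) = F_at ?t v"
  proof (rule fsub_rename_eq_F_at[OF _ _ _ m _ assignment_length[OF t] lv])
    show "distinct (Ys ! i)" "length (Ys ! i) = length X" "set (Ys ! i) \<inter> (set X \<union> allvars F) = {}"
      using dc disj nth_mem[OF i] Yi by (auto simp: distinct_concat_iff dest: arg_cong[where f = length])
    show "?s z = inst V v z" if "z \<in> set V" for z using that by (simp add: inst_append lv)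
  qed
qed

lemma fsub_bodies:
  assumes c: "copies_ok X V F Ys k" and v: "assignment V v" and ps: "assignment (concat Ys) ps"
  defines "ts \<equiv> split_like Ys ps"
  shows "fsub (inst (concat Ys) ps) (fsub (inst V v) (ge_body Ys))
           = And (Conj (map (\<lambda>t. F_at t v) ts)) (distinct_fm ts)"
    "fsub (inst (concat Ys) ps) (fsub (inst V v) (le_body Ys))
           = Imp (Conj (map (\<lambda>t. F_at t v) ts)) (some_equal_fm ts)"
proof -
  let ?s = "inst (V @ concat Ys) (v @ ps)"
  have l: "length ts = length Ys" by (simp add: ts_def length_split_like)
  have F: "map (\<lambda>Y. fsub ?s (rename X Y F)) Ys = map (\<lambda>t. F_at t v) ts"
    by (rule nth_equalityI) (use l copy_values(2)[OF c v ps] in \<open>simp_all add: ts_def\<close>)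
  have mm: "map (map ?s) Ys = map (map Pc) ts"
    by (rule nth_equalityI) (use l copy_values(1)[OF c v ps] in \<open>simp_all add: ts_def\<close>)
  have "map (\<lambda>(Y, Z). tup (map ?s Y) (map ?s Z)) (pairs Ys)
      = map (\<lambda>(t, u). tup (map Pc t) (map Pc u)) (pairs ts)" for tup
  proof -
    have "map (\<lambda>(Y, Z). tup (map ?s Y) (map ?s Z)) (pairs Ys) = map (\<lambda>(A, B). tup A B) (pairs (map (map ?s) Ys))"
      by (simp add: pairs_map comp_def split_def)
    also have "... = map (\<lambda>(t, u). tup (map Pc t) (map Pc u)) (pairs ts)"
      unfolding mm by (simp add: pairs_map comp_def split_def)
    finally show ?thesis .
  qed
  from this[of ne_tms] this[of eq_tms]
  have "map (\<lambda>(Y, Z). fsub ?s (tup_ne Y Z)) (pairs Ys) = map (\<lambda>(t, u). ne_tms (map Pc t) (map Pc u)) (pairs ts)"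
    "map (\<lambda>(Y, Z). fsub ?s (tup_eq Y Z)) (pairs Ys) = map (\<lambda>(t, u). eq_tms (map Pc t) (map Pc u)) (pairs ts)"
    by (simp_all add: fsub_tup_ne fsub_tup_eq)
  with F show "fsub (inst (concat Ys) ps) (fsub (inst V v) (ge_body Ys))
           = And (Conj (map (\<lambda>t. F_at t v) ts)) (distinct_fm ts)"
    "fsub (inst (concat Ys) ps) (fsub (inst V v) (le_body Ys))
           = Imp (Conj (map (\<lambda>t. F_at t v) ts)) (some_equal_fm ts)"
    using assignment_length[OF v]
    by (simp_all add: fsub_inst_inst ge_body_def le_body_def distinct_fm_def some_equal_fm_def
        fsub_Conj fsub_Disj comp_def case_prod_beta')
qed

lemma wf_bodies: "copies_ok X V F Ys k \<Longrightarrow> wf (ge_body Ys) \<and> wf (le_body Ys)"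
  using wf_rename[OF _ ok(2)] wf_tup
  by (auto simp: ge_body_def le_body_def copies_ok_def intro!: wf_Conj wf_Disj)

lemma fv_bodies:
  assumes "copies_ok X V F Ys k"
  shows "fv (ge_body Ys) \<subseteq> set (concat Ys) \<union> set V \<and> fv (le_body Ys) \<subseteq> set (concat Ys) \<union> set V"
proof -
  have "fv (rename X W F) \<subseteq> set (concat Ys) \<union> set V" if "W \<in> set Ys" for W
  proof -
    have "map sortof W = map sortof X" "distinct W" "set W \<inter> (set X \<union> allvars F) = {}"
      using assms that by (auto simp: copies_ok_def distinct_concat_iff)
    then have "length W = length X" "distinct W" "set W \<inter> (set X \<union> allvars F) = {}"
      by (auto dest: arg_cong[where f = length])
    moreover have "distinct X" using ok(1) by simp
    ultimately show ?thesis using fv_rename[of X W F] ok(3) that by fastforce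
  qed
  moreover have "fv (tup_ne W Z) \<subseteq> set (concat Ys) \<and> fv (tup_eq W Z) \<subseteq> set (concat Ys)"
    if wz: "(W, Z) \<in> set (pairs Ys)" for W Z
  proof -
    obtain i j where "W = Ys ! i" "Z = Ys ! j" "i < j" "j < length Ys" using wz by (auto simp: set_pairs)
    then have "W \<in> set Ys" "Z \<in> set Ys" by simp_all
    then have "set W \<subseteq> set (concat Ys)" "set Z \<subseteq> set (concat Ys)" by auto
    then show ?thesis using fv_tup[of W Z] by blast
  qed
  ultimately show ?thesis by (fastforce simp: ge_body_def le_body_def fv_Conj fv_Disj)
qed

lemma closed_bodies:
  assumes "copies_ok X V F Ys k" "assignment V v"
  shows "wf (fsub (inst V v) (ge_body Ys)) \<and> fv (fsub (inst V v) (ge_body Ys)) \<subseteq> set (concat Ys)"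
    "wf (fsub (inst V v) (le_body Ys)) \<and> fv (fsub (inst V v) (le_body Ys)) \<subseteq> set (concat Ys)"
  using wf_bodies[OF assms(1)] fv_bodies[OF assms(1)] wf_fsub[OF sort_respecting_inst[OF assms(2)]]
    fv_fsub_inst[OF assignment_length[OF assms(2)]] by blast+

lemma values_of_tuples:
  assumes c: "copies_ok X V F Ys k" and "length ts = k" and "\<forall>t\<in>set ts. assignment X t"
  shows "assignment (concat Ys) (concat ts)" "split_like Ys (concat ts) = ts"
proof -
  have l: "length Ys = length ts" using assms by (simp add: copies_ok_def)
  have "assignment (Ys ! i) (ts ! i)" if "i < length Ys" for i
  proof -
    have i: "Ys ! i \<in> set Ys" "ts ! i \<in> set ts" using that l by simp_all
    have "map sortof (Ys ! i) = map sortof X" using c i(1) unfolding copies_ok_def by blast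
    moreover have "assignment X (ts ! i)" using assms(3) i(2) by blast
    ultimately show ?thesis by (simp add: assignment_def)
  qed
  then have a: "list_all2 assignment Ys ts" using l by (simp add: list_all2_conv_all_nth)
  then show "assignment (concat Ys) (concat ts)" by (rule assignment_concat)
  have "map length ts = map length Ys"
    using a by (auto simp: list_all2_conv_all_nth assignment_length intro: nth_equalityI)
  then show "split_like Ys (concat ts) = ts" by (rule split_like_concat)
qed

lemma witnesses_lengths: "witnesses \<Gamma> v ts \<Longrightarrow> \<forall>t\<in>set ts. length t = length X"
  by (simp add: witnesses_def assignment_length)

lemma witnesses_iff_Conj:
  "witnesses \<Gamma> v ts = ((\<forall>t\<in>set ts. assignment X t) \<and> ndD0 \<Gamma> (Conj (map (\<lambda>t. F_at t v) ts)))"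
proof
  assume "witnesses \<Gamma> v ts"
  then show "(\<forall>t\<in>set ts. assignment X t) \<and> ndD0 \<Gamma> (Conj (map (\<lambda>t. F_at t v) ts))"
    by (intro conjI nd_ConjI) (auto simp: witnesses_def)
qed (auto simp: witnesses_def intro: nd_ConjE)

lemma nd_ge_body_I:
  assumes c: "copies_ok X V F Ys k" and v: "assignment V v"
    and ts: "distinct ts" "length ts = k" "witnesses \<Gamma> v ts"
  shows "ndD0 \<Gamma> (ExL (concat Ys) (fsub (inst V v) (ge_body Ys)))"
proof (rule nd_ExL_I)
  show "wf (fsub (inst V v) (ge_body Ys))" using closed_bodies[OF c v] by simp
  show "distinct (concat Ys)" using c by (simp add: copies_ok_def)
  have vals: "assignment (concat Ys) (concat ts)" "split_like Ys (concat ts) = ts"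
    using values_of_tuples[OF c ts(2)] ts(3) by (auto simp: witnesses_def)
  then show "assignment (concat Ys) (concat ts)" by simp
  have "ndD0 \<Gamma> (Conj (map (\<lambda>t. F_at t v) ts))"
    using ts(3) by (simp add: witnesses_iff_Conj)
  moreover have "ndD0 \<Gamma> (distinct_fm ts)"
    using distinct_fm[OF witnesses_lengths[OF ts(3)]] ts(1) by (intro nd_Std[OF Std_subset_Ax_D0]) auto
  ultimately show "ndD0 \<Gamma> (fsub (inst (concat Ys) (concat ts)) (fsub (inst V v) (ge_body Ys)))"
    using fsub_bodies(1)[OF c v vals(1)] vals(2) by (simp add: nd.andI)
qed

lemma nd_le_body_E:
  assumes c: "copies_ok X V F Ys k" and v: "assignment V v"
    and ts: "distinct ts" "length ts = k" "witnesses \<Gamma> v ts"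
    and le: "ndD0 \<Gamma> (AllL (concat Ys) (fsub (inst V v) (le_body Ys)))"
  shows "ndD0 \<Gamma> Bot"
proof -
  have vals: "assignment (concat Ys) (concat ts)" "split_like Ys (concat ts) = ts"
    using values_of_tuples[OF c ts(2)] ts(3) by (auto simp: witnesses_def)
  have "ndD0 \<Gamma> (Imp (Conj (map (\<lambda>t. F_at t v) ts)) (some_equal_fm ts))"
    using nd_AllL_E[OF le _ vals(1)] c fsub_bodies(2)[OF c v vals(1)] vals(2)
    by (simp add: copies_ok_def)
  moreover have "ndD0 \<Gamma> (Conj (map (\<lambda>t. F_at t v) ts))"
    using ts(3) by (simp add: witnesses_iff_Conj)
  ultimately have "ndD0 \<Gamma> (some_equal_fm ts)" by (rule nd.impE)
  then show ?thesis
    using some_equal_fm[OF witnesses_lengths[OF ts(3)]] ts(1) by (intro nd_Std_Bot[OF Std_subset_Ax_D0]) auto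
qed

lemma nd_ge_body_E:
  assumes C: "closed_set C" and c: "copies_ok X V F Ys k" and v: "assignment V v"
    and ge: "ndD0 C (ExL (concat Ys) (fsub (inst V v) (ge_body Ys)))" and G: "wf G" "fv G = {}"
    and witnessed: "\<And>ts \<Gamma>. C \<subseteq> \<Gamma> \<Longrightarrow> closed_set \<Gamma> \<Longrightarrow> distinct ts \<Longrightarrow> length ts = k
      \<Longrightarrow> witnesses \<Gamma> v ts \<Longrightarrow> ndD0 \<Gamma> G"
  shows "ndD0 C G"
proof (rule nd_ExL_omega_E[OF C ge])
  show "distinct (concat Ys)" using c by (simp add: copies_ok_def)
  show "fv (fsub (inst V v) (ge_body Ys)) \<subseteq> set (concat Ys)" "wf (fsub (inst V v) (ge_body Ys))"
    using closed_bodies[OF c v] by auto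
  fix ps assume ps: "assignment (concat Ys) ps"
  let ?ts = "split_like Ys ps"
  let ?H = "And (Conj (map (\<lambda>t. F_at t v) ?ts)) (distinct_fm ?ts)"
  have ts: "length ?ts = k" "\<forall>t\<in>set ?ts. assignment X t"
    using c copy_values(3)[OF c v ps] by (auto simp: length_split_like copies_ok_def in_set_conv_nth)
  have w: "witnesses (insert ?H C) v ?ts"
    using nd.andE1[OF nd_hyp_insert] ts(2) by (simp add: witnesses_iff_Conj)
  have "fv ?H = {}"
    using fsub_bodies(1)[OF c v ps] closed_bodies(1)[OF c v]
      fv_fsub_inst[OF assignment_length[OF ps], of "fsub (inst V v) (ge_body Ys)"] by auto
  then have cl: "closed_set (insert ?H C)" using C by (simp add: closed_set_insert)
  have "ndD0 (insert ?H C) G"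
  proof (cases "distinct ?ts")
    case True
    then show ?thesis using witnessed[OF _ cl True ts(1) w] by blast
  next
    case False
    have "ndD0 (insert ?H C) Bot"
      using distinct_fm[OF witnesses_lengths[OF w]] False
      by (intro nd_Std_Bot[OF Std_subset_Ax_D0 _ _ nd.andE2[OF nd_hyp_insert]]) auto
    then show ?thesis using G(1) by (rule nd.botE)
  qed
  then show "ndD0 (insert (fsub (inst (concat Ys) ps) (fsub (inst V v) (ge_body Ys))) C) G"
    by (simp add: fsub_bodies(1)[OF c v ps])
qed (use G in auto)

lemma nd_le_body_I:
  assumes C: "closed_set C" and c: "copies_ok X V F Ys k" and v: "assignment V v"
    and refuted: "\<And>ts \<Gamma>. C \<subseteq> \<Gamma> \<Longrightarrow> closed_set \<Gamma> \<Longrightarrow> distinct ts \<Longrightarrow> length ts = k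
      \<Longrightarrow> witnesses \<Gamma> v ts \<Longrightarrow> ndD0 \<Gamma> Bot"
  shows "ndD0 C (AllL (concat Ys) (fsub (inst V v) (le_body Ys)))"
proof (rule nd_AllL_omega)
  show "wf (fsub (inst V v) (le_body Ys))" using closed_bodies[OF c v] by simp
  show "distinct (concat Ys)" using c by (simp add: copies_ok_def)
  fix ps assume ps: "assignment (concat Ys) ps"
  let ?ts = "split_like Ys ps"
  let ?H = "Conj (map (\<lambda>t. F_at t v) ?ts)"
  have ts: "length ?ts = k" "\<forall>t\<in>set ?ts. assignment X t"
    using c copy_values(3)[OF c v ps] by (auto simp: length_split_like copies_ok_def in_set_conv_nth)
  have w: "witnesses (insert ?H C) v ?ts" using nd_hyp_insert ts(2) by (simp add: witnesses_iff_Conj)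
  have closed: "fv (fsub (inst (concat Ys) ps) (fsub (inst V v) (le_body Ys))) = {}"
    "wf (fsub (inst (concat Ys) ps) (fsub (inst V v) (le_body Ys)))"
    using closed_bodies(2)[OF c v] fv_fsub_inst[OF assignment_length[OF ps]]
      wf_fsub[OF sort_respecting_inst[OF ps]] by blast+
  then have H: "fv ?H = {}" "wf ?H" and S: "wf (some_equal_fm ?ts)"
    by (auto simp: fsub_bodies(2)[OF c v ps])
  have "ndD0 (insert ?H C) (some_equal_fm ?ts)"
  proof (cases "distinct ?ts")
    case True
    have "ndD0 (insert ?H C) Bot"
      using refuted[OF _ _ True ts(1) w] C H by (auto simp: closed_set_insert)
    then show ?thesis using S by (rule nd.botE)
  next
    case False
    then show ?thesis
      using some_equal_fm[OF witnesses_lengths[OF w]] by (intro nd_Std[OF Std_subset_Ax_D0]) auto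
  qed
  then show "ndD0 C (fsub (inst (concat Ys) ps) (fsub (inst V v) (le_body Ys)))"
    using H by (simp add: fsub_bodies(2)[OF c v ps] nd.impI)
qed

text \<open>The matrices of the right-hand sides of \<open>D1\<close>, at \<open>V = v\<close>, \<open>Y = r\<close>.\<close>
definition Start_ge :: "pc list \<Rightarrow> pc \<Rightarrow> fm" where
  "Start_ge v r = And (Agg Start X V F (map Var X @ map Pc v @ [Var N])) (Cmp Ge (Var N) (Pc r))"

definition Start_le :: "pc list \<Rightarrow> pc \<Rightarrow> fm" where
  "Start_le v r = Imp (Agg Start X V F (map Var X @ map Pc v @ [Var N])) (Cmp Le (Var N) (Pc r))"

lemma fsub_Start_ge_le:
  assumes "assignment X t"
  shows "fsub (inst (X @ [N]) (t @ [p])) (Start_ge v r) = And (Start_at t v (Pc p)) (Cmp Ge (Pc p) (Pc r))"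
    "fsub (inst (X @ [N]) (t @ [p])) (Start_le v r) = Imp (Start_at t v (Pc p)) (Cmp Le (Pc p) (Pc r))"
proof -
  have d: "distinct (X @ [N])" and l: "length t = length X"
    using ok assms by (auto simp: assignment_length)
  have "map (inst (X @ [N]) (t @ [p])) X = map Pc t" by (rule map_inst_append_left[OF d l])
  moreover have "map (inst (X @ [N]) (t @ [p])) [N] = map Pc [p]"
    by (rule map_inst_append_right[OF d l]) simp
  ultimately show "fsub (inst (X @ [N]) (t @ [p])) (Start_ge v r) = And (Start_at t v (Pc p)) (Cmp Ge (Pc p) (Pc r))"
    "fsub (inst (X @ [N]) (t @ [p])) (Start_le v r) = Imp (Start_at t v (Pc p)) (Cmp Le (Pc p) (Pc r))"
    by (simp_all add: Start_ge_def Start_le_def Start_at_def comp_def)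
qed

lemma Start_ge_le_props:
  assumes "assignment V v"
  shows "wf (Start_ge v r) \<and> fv (Start_ge v r) \<subseteq> set (X @ [N])"
    "wf (Start_le v r) \<and> fv (Start_le v r) \<subseteq> set (X @ [N])"
proof -
  have "list_all2 has_sort (map Var X @ map Pc v @ [Var N]) (map sortof (X @ V) @ [Integer])"
    using list_all2_has_sort_Var[of X] list_all2_has_sort_assignment[OF assms] ok(6)
    by (auto intro!: list_all2_appendI)
  then show "wf (Start_ge v r) \<and> fv (Start_ge v r) \<subseteq> set (X @ [N])"
    "wf (Start_le v r) \<and> fv (Start_le v r) \<subseteq> set (X @ [N])"
    using ok by (auto simp: Start_ge_def Start_le_def)
qed

lemma assignment_XN: "assignment (X @ [N]) ps = (\<exists>t k. ps = t @ [Num k] \<and> assignment X t)"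
proof
  assume "assignment (X @ [N]) ps"
  then show "\<exists>t k. ps = t @ [Num k] \<and> assignment X t"
    using ok(6) by (auto simp: assignment_def list_all2_append1 list_all2_Cons1)
qed (use ok(6) in \<open>auto simp: assignment_def intro!: list_all2_appendI\<close>)

lemma nd_Start_ge_I:
  assumes "assignment X t" "assignment V v" "ndD0 \<Gamma> (Start_at t v (Pc (Num k)))"
    "holds (\<lambda>_. Num 0) (Cmp Ge (Pc (Num k)) (Pc r))"
  shows "ndD0 \<Gamma> (ExL (X @ [N]) (Start_ge v r))"
proof (rule nd_ExL_I)
  show "wf (Start_ge v r)" using Start_ge_le_props[OF assms(2)] by simp
  show "distinct (X @ [N])" using ok by auto
  show "assignment (X @ [N]) (t @ [Num k])" using assms(1) by (auto simp: assignment_XN)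
  have "ndD0 \<Gamma> (Cmp Ge (Pc (Num k)) (Pc r))" by (rule nd_Std[OF Std_subset_Ax_D0]) (use assms(4) in auto)
  then show "ndD0 \<Gamma> (fsub (inst (X @ [N]) (t @ [Num k])) (Start_ge v r))"
    unfolding fsub_Start_ge_le[OF assms(1)] by (rule nd.andI[OF assms(3)])
qed

lemma nd_Start_le_E:
  assumes "ndD0 \<Gamma> (AllL (X @ [N]) (Start_le v r))" "assignment X t" "ndD0 \<Gamma> (Start_at t v (Pc (Num k)))"
  shows "ndD0 \<Gamma> (Cmp Le (Pc (Num k)) (Pc r))"
proof -
  have "ndD0 \<Gamma> (fsub (inst (X @ [N]) (t @ [Num k])) (Start_le v r))"
    by (rule nd_AllL_E[OF assms(1)]) (use ok assms(2) in \<open>auto simp: assignment_XN\<close>)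
  then show ?thesis using assms(3) by (auto simp: fsub_Start_ge_le[OF assms(2)] intro: nd.impE)
qed

definition zeros :: "pc list" where
  "zeros = map (\<lambda>_. Num 0) X"

lemma assignment_zeros: "assignment X zeros"
proof -
  have "Num 0 \<in> dom_of s" for s by (cases s) auto
  then show ?thesis by (simp add: assignment_def zeros_def list_all2_conv_all_nth)
qed

lemma nd_Start_at_zeros: "assignment V v \<Longrightarrow> ndD0 \<Gamma> (Start_at zeros v (Pc (Num 0)))"
  by (rule nd_Start_at_nonpos[OF assignment_zeros]) auto

lemma nd_Atleast_at_if_Start_at:
  assumes t: "assignment X t" and v: "assignment V v" and C: "closed_set C"
    and S: "ndD0 C (Start_at t v (Pc (Num k)))" and n: "0 < n" "n \<le> k"
  shows "ndD0 C (Atleast_at v (Num n))"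
proof (rule nd_Start_at_E[OF C t v])
  show "ndD0 C (Start_at t v (Pc (Num (int (nat k)))))" "1 \<le> nat k" using S n by simp_all
  show "wf (Atleast_at v (Num n))" "fv (Atleast_at v (Num n)) = {}"
    using Atleast_Atmost_at_closed(1)[OF v] by auto
  fix ts \<Gamma> assume \<Gamma>: "closed_set \<Gamma>" and ts: "sorted_wrt lex_less (t # ts)" "length ts + 1 = nat k"
    "witnesses \<Gamma> v (t # ts)"
  let ?us = "take (nat n) (t # ts)"
  have "witnesses \<Gamma> v ?us" using ts(3) set_take_subset[of _ "t # ts"] unfolding witnesses_def by blast
  moreover have "distinct ?us" using sorted_wrt_lex_less_distinct[OF ts(1)] by simp
  moreover have "length ?us = nat n" using ts(2) n by simp
  ultimately have "ndD0 \<Gamma> (ExL (concat (copies (nat n))) (fsub (inst V v) (ge_body (copies (nat n)))))"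
    by (intro nd_ge_body_I[OF copies_ok v])
  then show "ndD0 \<Gamma> (Atleast_at v (Num n))"
    using nd_Atleast_at_iff[OF v, of \<Gamma> "Num n"] fsub_exists_ge_le(1)[OF copies_ok n(1)]
    by (auto intro: nd_IffD2)
qed

lemma nd_Bot_if_Atmost_at_Start_at:
  assumes t: "assignment X t" and v: "assignment V v" and C: "closed_set C"
    and M: "ndD0 C (Atmost_at v (Num n))" and S: "ndD0 C (Start_at t v (Pc (Num k)))" and n: "0 \<le> n" "n < k"
  shows "ndD0 C Bot"
proof -
  let ?Ys = "copies (nat (n + 1))"
  have le: "ndD0 C (AllL (concat ?Ys) (fsub (inst V v) (le_body ?Ys)))"
    using nd_IffD1[OF nd_Atmost_at_iff[OF v] M] fsub_exists_ge_le(2)[OF copies_ok n(1)] by simp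
  show ?thesis
  proof (rule nd_Start_at_E[OF C t v])
    show "ndD0 C (Start_at t v (Pc (Num (int (nat k)))))" "1 \<le> nat k" using S n by simp_all
    fix ts \<Gamma> assume \<Gamma>: "C \<subseteq> \<Gamma>" "closed_set \<Gamma>" and ts: "sorted_wrt lex_less (t # ts)"
      "length ts + 1 = nat k" "witnesses \<Gamma> v (t # ts)"
    let ?us = "take (nat (n + 1)) (t # ts)"
    have "witnesses \<Gamma> v ?us" using ts(3) set_take_subset[of _ "t # ts"] unfolding witnesses_def by blast
    moreover have "distinct ?us" using sorted_wrt_lex_less_distinct[OF ts(1)] by simp
    moreover have "length ?us = nat (n + 1)" using ts(2) n by simp
    ultimately show "ndD0 \<Gamma> Bot"
      using nd_le_body_E[OF copies_ok v] nd_weaken_closed[OF le \<Gamma>] by blast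
  qed auto
qed

lemma nd_Atleast_at_imp_Start_ge:
  assumes v: "assignment V v"
  shows "ndD0 {Atleast_at v r} (ExL (X @ [N]) (Start_ge v r))"
proof -
  let ?C = "{Atleast_at v r}" and ?G = "ExL (X @ [N]) (Start_ge v r)"
  have wG: "wf ?G" and fG: "fv ?G = {}" using Start_ge_le_props(1)[OF v] by (auto simp: wf_ExL fv_ExL)
  have E: "ndD0 ?C (fsub (inst V v) (exists_ge X F (copies (cnt_ge r)) r))"
    by (rule nd_IffD1[OF nd_Atleast_at_iff[OF v] nd_hyp_insert])
  show ?thesis
  proof (cases "\<exists>n. r = Num n \<and> 0 < n")
    case True
    then obtain n where n: "r = Num n" "0 < n" by blast
    show ?thesis
    proof (rule nd_ge_body_E[OF _ copies_ok v _ wG fG])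
      show "closed_set ?C" using Atleast_Atmost_at_closed(1)[OF v] by (simp add: closed_set_def)
      show "ndD0 ?C (ExL (concat (copies (nat n))) (fsub (inst V v) (ge_body (copies (nat n)))))"
        using E n fsub_exists_ge_le(1)[OF copies_ok] by simp
      fix ts \<Gamma> assume ts: "distinct ts" "length ts = nat n" "witnesses \<Gamma> v ts"
      have "ts \<noteq> []" and len: "int (length ts) = n" using ts(2) n(2) by auto
      then obtain t where "assignment X t" "ndD0 \<Gamma> (Start_at t v (Pc (Num (int (length ts)))))"
        using obtain_Start_at[OF ts(1) _ v ts(3)] by blast
      then show "ndD0 \<Gamma> ?G" using nd_Start_ge_I[OF _ v] n len by simp
    qed
  next
    case False
    then consider "holds (\<lambda>_. Num 0) (Cmp Ge (Pc (Num 0)) (Pc r))" | "exists_ge X F (copies (cnt_ge r)) r = Bot"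
      by (cases r) (auto simp: linorder_not_less le_less)
    then show ?thesis
    proof cases
      case 1
      then show ?thesis by (rule nd_Start_ge_I[OF assignment_zeros v nd_Start_at_zeros[OF v]])
    next
      case 2
      then show ?thesis using E wG by (auto intro: nd.botE)
    qed
  qed
qed

lemma nd_Start_ge_imp_Atleast_at:
  assumes v: "assignment V v"
  shows "ndD0 {ExL (X @ [N]) (Start_ge v r)} (Atleast_at v r)"
proof -
  let ?R = "ExL (X @ [N]) (Start_ge v r)"
  have R: "wf (Start_ge v r)" "fv (Start_ge v r) \<subseteq> set (X @ [N])" using Start_ge_le_props(1)[OF v] by auto
  have C: "closed_set {?R}" using R by (simp add: closed_set_def fv_ExL)
  have G: "wf (Atleast_at v r)" "fv (Atleast_at v r) = {}" using Atleast_Atmost_at_closed(1)[OF v] by auto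
  show ?thesis
  proof (cases "exists_ge X F (copies (cnt_ge r)) r = Top")
    case True
    then show ?thesis by (intro nd_IffD2[OF nd_Atleast_at_iff[OF v]]) (simp add: fsub_Top nd_Top)
  next
    case notop: False
    show ?thesis
    proof (rule nd_ExL_omega_E[OF C nd_hyp_insert _ R(2,1) G])
      show "distinct (X @ [N])" using ok by auto
      fix ps assume "assignment (X @ [N]) ps"
      then obtain t k where ps: "ps = t @ [Num k]" and t: "assignment X t" by (auto simp: assignment_XN)
      let ?H = "And (Start_at t v (Pc (Num k))) (Cmp Ge (Pc (Num k)) (Pc r))"
      have "ndD0 (insert ?H {?R}) (Atleast_at v r)"
      proof (cases "holds (\<lambda>_. Num 0) (Cmp Ge (Pc (Num k)) (Pc r))")
        case True
        then obtain n where n: "r = Num n" "0 < n" "n \<le> k" using notop by (cases r) (auto split: if_splits)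
        have "closed_set (insert ?H {?R})" using C Start_at_closed[OF t v] by (simp add: closed_set_insert)
        then show ?thesis
          using nd_Atleast_at_if_Start_at[OF t v _ nd.andE1[OF nd_hyp_insert] n(2,3)] n(1) by simp
      next
        case False
        then have "ndD0 (insert ?H {?R}) Bot"
          by (intro nd_Std_Bot[OF Std_subset_Ax_D0 _ _ nd.andE2[OF nd_hyp_insert]]) auto
        then show ?thesis using G(1) by (rule nd.botE)
      qed
      then show "ndD0 (insert (fsub (inst (X @ [N]) ps) (Start_ge v r)) {?R}) (Atleast_at v r)"
        by (simp add: ps fsub_Start_ge_le(1)[OF t])
    qed
  qed
qed

lemma nd_Atmost_at_imp_Start_le:
  assumes v: "assignment V v"
  shows "ndD0 {Atmost_at v r} (AllL (X @ [N]) (Start_le v r))"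
proof (rule nd_AllL_omega)
  show "wf (Start_le v r)" "distinct (X @ [N])" using Start_ge_le_props(2)[OF v] ok by auto
  fix ps assume "assignment (X @ [N]) ps"
  then obtain t k where ps: "ps = t @ [Num k]" and t: "assignment X t" by (auto simp: assignment_XN)
  let ?S = "Start_at t v (Pc (Num k))" and ?C = "{Atmost_at v r}"
  have S: "fv ?S = {}" "wf ?S" using Start_at_closed[OF t v] by auto
  have C: "closed_set (insert ?S ?C)" using S Atleast_Atmost_at_closed(2)[OF v] by (simp add: closed_set_def)
  have "ndD0 (insert ?S ?C) (Cmp Le (Pc (Num k)) (Pc r))"
  proof (cases "holds (\<lambda>_. Num 0) (Cmp Le (Pc (Num k)) (Pc r))")
    case True
    then show ?thesis by (intro nd_Std[OF Std_subset_Ax_D0]) auto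
  next
    case False
    have "ndD0 (insert ?S ?C) Bot"
    proof (cases "\<exists>n. r = Num n \<and> 0 \<le> n")
      case True
      then obtain n where n: "r = Num n" "0 \<le> n" by blast
      then have "n < k" using False by auto
      show ?thesis
        by (rule nd_Bot_if_Atmost_at_Start_at[OF t v C _ nd_hyp_insert n(2) \<open>n < k\<close>])
          (use n(1) in \<open>auto intro: nd.hyp\<close>)
    next
      case no_count: False
      then have "exists_le X F (copies (cnt_le r)) r = Bot" using False by (cases r) auto
      then show ?thesis using nd_IffD1[OF nd_Atmost_at_iff[OF v] nd.hyp[of "Atmost_at v r"]] by auto
    qed
    then show ?thesis by (rule nd.botE) simp
  qed
  then show "ndD0 ?C (fsub (inst (X @ [N]) ps) (Start_le v r))"
    using S by (simp add: ps fsub_Start_ge_le(2)[OF t] nd.impI)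
qed

lemma nd_Start_le_imp_Atmost_at:
  assumes v: "assignment V v"
  shows "ndD0 {AllL (X @ [N]) (Start_le v r)} (Atmost_at v r)"
proof -
  let ?R = "AllL (X @ [N]) (Start_le v r)"
  have R: "ndD0 \<Gamma> ?R" if "?R \<in> \<Gamma>" for \<Gamma> using that by (rule nd.hyp)
  have C: "closed_set {?R}" using Start_ge_le_props(2)[OF v] by (simp add: closed_set_def fv_AllL)
  have G: "wf (Atmost_at v r)" using Atleast_Atmost_at_closed(2)[OF v] by auto
  show ?thesis
  proof (cases "\<exists>n. r = Num n \<and> 0 \<le> n")
    case True
    then obtain n where n: "r = Num n" "0 \<le> n" by blast
    let ?Ys = "copies (nat (n + 1))"
    have "ndD0 {?R} (AllL (concat ?Ys) (fsub (inst V v) (le_body ?Ys)))"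
    proof (rule nd_le_body_I[OF C copies_ok v])
      fix ts \<Gamma> assume \<Gamma>: "{?R} \<subseteq> \<Gamma>" and ts: "distinct ts" "length ts = nat (n + 1)" "witnesses \<Gamma> v ts"
      have "ts \<noteq> []" and len: "int (length ts) = n + 1" using ts(2) n(2) by auto
      then obtain t where "assignment X t" "ndD0 \<Gamma> (Start_at t v (Pc (Num (int (length ts)))))"
        using obtain_Start_at[OF ts(1) _ v ts(3)] by blast
      then have t: "assignment X t" "ndD0 \<Gamma> (Start_at t v (Pc (Num (n + 1))))" by (simp_all only: len)
      show "ndD0 \<Gamma> Bot"
        using nd_Start_le_E[OF R t] \<Gamma> n by (intro nd_Std_Bot[OF Std_subset_Ax_D0]) auto
    qed
    then show ?thesis
      using nd_IffD2[OF nd_Atmost_at_iff[OF v]] fsub_exists_ge_le(2)[OF copies_ok n(2)] n(1) by simp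
  next
    case False
    then consider "\<not> holds (\<lambda>_. Num 0) (Cmp Le (Pc (Num 0)) (Pc r))" | "exists_le X F (copies (cnt_le r)) r = Top"
      by (cases r) auto
    then show ?thesis
    proof cases
      case 1
      have "ndD0 {?R} Bot"
        using nd_Start_le_E[OF R assignment_zeros nd_Start_at_zeros[OF v]] 1
        by (intro nd_Std_Bot[OF Std_subset_Ax_D0]) auto
      then show ?thesis using G by (rule nd.botE)
    next
      case 2
      then show ?thesis by (intro nd_IffD2[OF nd_Atmost_at_iff[OF v]]) (simp add: fsub_Top nd_Top)
    qed
  qed
qed

definition D1_Atleast :: fm where
  "D1_Atleast = AllL (V @ [Y]) (Iff (Agg Atleast X V F (map Var (V @ [Y])))
     (ExL (X @ [N]) (And (StartA X V F X (Var N)) (Cmp Ge (Var N) (Var Y)))))"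

definition D1_Atmost :: fm where
  "D1_Atmost = AllL (V @ [Y]) (Iff (Agg Atmost X V F (map Var (V @ [Y])))
     (AllL (X @ [N]) (Imp (StartA X V F X (Var N)) (Cmp Le (Var N) (Var Y)))))"

lemma D1_Atleast_Atmost_closed: "fv D1_Atleast = {} \<and> wf D1_Atleast" "fv D1_Atmost = {} \<and> wf D1_Atmost"
proof -
  have "list_all2 has_sort (map Var V @ [Var Y]) (map sortof V @ [General])"
    "list_all2 has_sort (map Var X @ map Var V @ [Var N]) (map sortof (X @ V) @ [Integer])"
    using list_all2_has_sort_Var[of X] list_all2_has_sort_Var[of V] ok(6)
    by (auto intro!: list_all2_appendI)
  then show "fv D1_Atleast = {} \<and> wf D1_Atleast" "fv D1_Atmost = {} \<and> wf D1_Atmost"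
    using ok by (auto simp: Iff_def StartA_def D1_Atleast_def D1_Atmost_def wf_ExL wf_AllL fv_ExL fv_AllL)
qed

lemma assignment_VY: "assignment (V @ [Y]) ps = (\<exists>v r. ps = v @ [r] \<and> assignment V v)"
proof
  assume "assignment (V @ [Y]) ps"
  then show "\<exists>v r. ps = v @ [r] \<and> assignment V v"
    by (auto simp: assignment_def list_all2_append1 list_all2_Cons1)
qed (use ok(4) in \<open>auto simp: assignment_def intro!: list_all2_appendI\<close>)

lemma fsub_D1_sides:
  fixes v :: "pc list" and r :: pc
  assumes v: "assignment V v"
  defines "s \<equiv> inst (V @ [Y]) (v @ [r])"
  shows "fsub s (Agg Atleast X V F (map Var (V @ [Y]))) = Atleast_at v r"
    "fsub s (Agg Atmost X V F (map Var (V @ [Y]))) = Atmost_at v r"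
    "fsub s (ExL (X @ [N]) (And (StartA X V F X (Var N)) (Cmp Ge (Var N) (Var Y))))
       = ExL (X @ [N]) (Start_ge v r)"
    "fsub s (AllL (X @ [N]) (Imp (StartA X V F X (Var N)) (Cmp Le (Var N) (Var Y))))
       = AllL (X @ [N]) (Start_le v r)"
proof -
  have d: "distinct (V @ [Y])" and l: "length v = length V" using ok v by (auto simp: assignment_length)
  have fixed: "s z = Var z" if "z \<in> set (X @ [N])" for z
    unfolding s_def by (rule inst_notin) (use ok that in auto)
  then have X: "map s X = map Var X" by (induction X) auto
  have V: "map s V = map Pc v" unfolding s_def by (rule map_inst_append_left[OF d l])
  have "map s [Y] = map Pc [r]" unfolding s_def by (rule map_inst_append_right[OF d l]) simp
  then have Y: "s Y = Pc r" by simp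
  show "fsub s (Agg Atleast X V F (map Var (V @ [Y]))) = Atleast_at v r"
    "fsub s (Agg Atmost X V F (map Var (V @ [Y]))) = Atmost_at v r"
    using V Y by (simp_all add: Atleast_at_def Atmost_at_def comp_def)
  show "fsub s (ExL (X @ [N]) (And (StartA X V F X (Var N)) (Cmp Ge (Var N) (Var Y))))
       = ExL (X @ [N]) (Start_ge v r)"
    using fixed[of N] fsub_ExL[of "X @ [N]" s, OF fixed] by (simp add: X V Y Start_ge_def StartA_def comp_def)
  show "fsub s (AllL (X @ [N]) (Imp (StartA X V F X (Var N)) (Cmp Le (Var N) (Var Y))))
       = AllL (X @ [N]) (Start_le v r)"
    using fixed[of N] fsub_AllL[of "X @ [N]" s, OF fixed] by (simp add: X V Y Start_le_def StartA_def comp_def)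
qed

lemma nd_D1_Atleast: "ndD0 {} D1_Atleast"
  unfolding D1_Atleast_def
proof (rule nd_AllL_omega)
  show "wf (Iff (Agg Atleast X V F (map Var (V @ [Y])))
     (ExL (X @ [N]) (And (StartA X V F X (Var N)) (Cmp Ge (Var N) (Var Y)))))"
    using D1_Atleast_Atmost_closed(1) by (simp add: D1_Atleast_def wf_AllL)
  show "distinct (V @ [Y])" using ok by auto
  fix ps assume "assignment (V @ [Y]) ps"
  then obtain v r where ps: "ps = v @ [r]" and v: "assignment V v" by (auto simp: assignment_VY)
  have "ndD0 {} (Iff (Atleast_at v r) (ExL (X @ [N]) (Start_ge v r)))"
    using nd_Atleast_at_imp_Start_ge[OF v] nd_Start_ge_imp_Atleast_at[OF v]
      Atleast_Atmost_at_closed(1)[OF v] Start_ge_le_props(1)[OF v]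
    by (intro nd_IffI) (auto simp: wf_ExL)
  then show "ndD0 {} (fsub (inst (V @ [Y]) ps) (Iff (Agg Atleast X V F (map Var (V @ [Y])))
     (ExL (X @ [N]) (And (StartA X V F X (Var N)) (Cmp Ge (Var N) (Var Y))))))"
    unfolding ps fsub_Iff fsub_D1_sides[OF v] .
qed

lemma nd_D1_Atmost: "ndD0 {} D1_Atmost"
  unfolding D1_Atmost_def
proof (rule nd_AllL_omega)
  show "wf (Iff (Agg Atmost X V F (map Var (V @ [Y])))
     (AllL (X @ [N]) (Imp (StartA X V F X (Var N)) (Cmp Le (Var N) (Var Y)))))"
    using D1_Atleast_Atmost_closed(2) by (simp add: D1_Atmost_def wf_AllL)
  show "distinct (V @ [Y])" using ok by auto
  fix ps assume "assignment (V @ [Y]) ps"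
  then obtain v r where ps: "ps = v @ [r]" and v: "assignment V v" by (auto simp: assignment_VY)
  have "ndD0 {} (Iff (Atmost_at v r) (AllL (X @ [N]) (Start_le v r)))"
    using nd_Atmost_at_imp_Start_le[OF v] nd_Start_le_imp_Atmost_at[OF v]
      Atleast_Atmost_at_closed(2)[OF v] Start_ge_le_props(2)[OF v]
    by (intro nd_IffI) (auto simp: wf_AllL)
  then show "ndD0 {} (fsub (inst (V @ [Y]) ps) (Iff (Agg Atmost X V F (map Var (V @ [Y])))
     (AllL (X @ [N]) (Imp (StartA X V F X (Var N)) (Cmp Le (Var N) (Var Y))))))"
    unfolding ps fsub_Iff fsub_D1_sides[OF v] .
qed

end

lemma D1_cases:
  assumes "A \<in> D1"
  obtains X V F Y N where "D1_instance X V F Y N"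
    "A = D1_instance.D1_Atleast X V F Y N \<or> A = D1_instance.D1_Atmost X V F Y N"
proof -
  obtain X V F Y N where "D1_ok X V F Y N"
    "A = D1_instance.D1_Atleast X V F Y N \<or> A = D1_instance.D1_Atmost X V F Y N"
    using assms unfolding D1_def D1_instance.D1_Atleast_def[OF D1_instance.intro]
      D1_instance.D1_Atmost_def[OF D1_instance.intro] by blast
  then show thesis using that D1_instance.intro by blast
qed

lemma D1_closed: "A \<in> D1 \<Longrightarrow> fv A = {} \<and> wf A"
  by (elim D1_cases) (auto dest: D1_instance.D1_Atleast_Atmost_closed)

lemma nd_D1: "A \<in> D1 \<Longrightarrow> ndD0 {} A"
  by (elim D1_cases) (auto dest: D1_instance.nd_D1_Atleast D1_instance.nd_D1_Atmost)

section \<open>Induction, compactness and the theorem\<close>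

lemma nd_numeral_induction:
  assumes Std: "Std \<subseteq> Ax" and N: "sortof N = Integer" and F: "wf F"
    and base: "nd True Ax \<Gamma> (subst N (Pc (Num 0)) F)"
    and step: "nd True Ax \<Gamma> (All N (Imp (And (Cmp Ge (Var N) (Pc (Num 0))) F)
                                        (subst N (Add (Var N) (Pc (Num 1))) F)))"
  shows "nd True Ax \<Gamma> (subst N (Pc (Num (int k))) F)"
proof (induction k)
  case 0
  then show ?case using base by simp
next
  case (Suc k)
  let ?k = "Pc (Num (int k))"
  have "nd True Ax \<Gamma> (subst N ?k (Imp (And (Cmp Ge (Var N) (Pc (Num 0))) F)
                                   (subst N (Add (Var N) (Pc (Num 1))) F)))"
    by (rule nd.allE[OF step]) (use N in \<open>auto intro: free_for_closed\<close>)
  then have "nd True Ax \<Gamma> (Imp (And (Cmp Ge ?k (Pc (Num 0))) (subst N ?k F))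
                               (subst N (Add ?k (Pc (Num 1))) F))"
    by (simp add: subst_subst)
  moreover have "nd True Ax \<Gamma> (Cmp Ge ?k (Pc (Num 0)))" by (rule nd_Std[OF Std]) auto
  ultimately have r: "nd True Ax \<Gamma> (subst N (Add ?k (Pc (Num 1))) F)"
    using Suc.IH by (blast intro: nd.impE nd.andI)
  have e: "nd True Ax \<Gamma> (Cmp Eq (Add ?k (Pc (Num 1))) (Pc (Num (int (Suc k)))))"
    by (rule nd_Std[OF Std]) (auto simp: closed_arith_def)
  show ?case by (rule nd.eqE[OF e r]) (use N in \<open>simp_all add: free_for_closed\<close>)
qed

lemma nd_Ind:
  assumes Std: "Std \<subseteq> Ax" and A: "A \<in> Ind"
  shows "nd True Ax \<Gamma> A"
proof -
  obtain N F where N: "sortof N = Integer" and F: "wf F"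
    and A: "A = Imp (And (subst N (Pc (Num 0)) F)
                   (All N (Imp (And (Cmp Ge (Var N) (Pc (Num 0))) F)
                               (subst N (Add (Var N) (Pc (Num 1))) F))))
              (All N (Imp (Cmp Ge (Var N) (Pc (Num 0))) F))"
    using A unfolding Ind_def by blast
  define H where "H = And (subst N (Pc (Num 0)) F)
                   (All N (Imp (And (Cmp Ge (Var N) (Pc (Num 0))) F)
                               (subst N (Add (Var N) (Pc (Num 1))) F)))"
  have wH: "wf H" unfolding H_def using N F by (auto intro!: wf_subst)
  have hH: "nd True Ax (insert H \<Gamma>) (And (subst N (Pc (Num 0)) F)
                   (All N (Imp (And (Cmp Ge (Var N) (Pc (Num 0))) F)
                               (subst N (Add (Var N) (Pc (Num 1))) F))))"
    unfolding H_def[symmetric] by (rule nd_hyp_insert)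
  have inst: "nd True Ax (insert H \<Gamma>) (subst N (Pc (Num (int k))) F)" for k
    by (rule nd_numeral_induction[OF Std N F nd.andE1[OF hH] nd.andE2[OF hH]])
  have "nd True Ax (insert H \<Gamma>) (All N (Imp (Cmp Ge (Var N) (Pc (Num 0))) F))"
  proof (rule nd.omega)
    fix p assume "p \<in> dom_of (sortof N)"
    then obtain n where p: "p = Num n" using N by auto
    have "nd True Ax (insert (Cmp Ge (Pc (Num n)) (Pc (Num 0))) (insert H \<Gamma>)) (subst N (Pc (Num n)) F)"
    proof (cases "n \<ge> 0")
      case True
      then show ?thesis using nd_weaken_insert[OF inst[of "nat n"]] by simp
    next
      case False
      have "nd True Ax (insert (Cmp Ge (Pc (Num n)) (Pc (Num 0))) (insert H \<Gamma>)) Bot"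
        by (rule nd_Std_Bot[OF Std _ _ nd_hyp_insert]) (use False in auto)
      then show ?thesis using wf_subst[of "Pc (Num n)" N F] N F by (auto intro: nd.botE)
    qed
    then show "nd True Ax (insert H \<Gamma>) (subst N (Pc p) (Imp (Cmp Ge (Var N) (Pc (Num 0))) F))"
      using p by (auto intro: nd.impI)
  qed (use F in simp_all)
  then show ?thesis unfolding A H_def[symmetric] by (rule nd.impI[OF _ wH])
qed

text \<open>Finiteness of \<open>B'\<close> relies on \<open>\<omega>\<close>-freeness: an \<omega>-rule has infinitely many premises.\<close>
lemma nd_translate:
  assumes "nd False Ax \<Gamma> F" "Ax \<subseteq> A \<union> I \<union> B" "\<And>i \<Delta>. i \<in> I \<Longrightarrow> nd True A \<Delta> i" "closed_set B"
  shows "\<exists>B'\<subseteq>B. finite B' \<and> nd True A (\<Gamma> \<union> B') F"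
proof -
  have weak: "B1 \<subseteq> B2 \<Longrightarrow> B2 \<subseteq> B \<Longrightarrow> nd True A (\<Gamma> \<union> B1) F \<Longrightarrow> nd True A (\<Gamma> \<union> B2) F"
    for B1 B2 \<Gamma> F
    using nd_weaken[of True A "\<Gamma> \<union> B1" F "\<Gamma> \<union> B2"] assms(4) by (auto simp: closed_set_def)
  have fresh: "x \<notin> (\<Union>G\<in>\<Gamma>. fv G) \<Longrightarrow> B' \<subseteq> B \<Longrightarrow> x \<notin> (\<Union>G\<in>\<Gamma> \<union> B'. fv G)" for x \<Gamma> B'
    using assms(4) by (auto simp: closed_set_def)
  show ?thesis
    using assms(1)
  proof (induction rule: nd.induct)
    case (axiom F \<Gamma>)
    consider "F \<in> A" | "F \<in> I" | "F \<in> B" using axiom assms(2) by blast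
    then show ?case
    proof cases
      case 1 then show ?thesis by (intro HOL.exI[of _ "{}"]) (auto intro: nd.axiom)
    next
      case 2 then show ?thesis using assms(3) by (intro HOL.exI[of _ "{}"]) auto
    next
      case 3 then show ?thesis by (intro HOL.exI[of _ "{F}"]) (auto intro: nd.hyp)
    qed
  next
    case (andI \<Gamma> F G)
    then obtain B1 B2 where B: "B1 \<subseteq> B" "finite B1" "nd True A (\<Gamma> \<union> B1) F"
      "B2 \<subseteq> B" "finite B2" "nd True A (\<Gamma> \<union> B2) G" by blast
    have "nd True A (\<Gamma> \<union> (B1 \<union> B2)) F" "nd True A (\<Gamma> \<union> (B1 \<union> B2)) G"
      by (rule weak[OF _ _ B(3)] weak[OF _ _ B(6)]; use B in blast)+
    then show ?case using B by (intro HOL.exI[of _ "B1 \<union> B2"]) (auto intro: nd.andI)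
  next
    case (orE \<Gamma> F G H)
    then obtain B1 B2 B3 where B: "B1 \<subseteq> B" "finite B1" "nd True A (\<Gamma> \<union> B1) (Or F G)"
      "B2 \<subseteq> B" "finite B2" "nd True A (insert F \<Gamma> \<union> B2) H"
      "B3 \<subseteq> B" "finite B3" "nd True A (insert G \<Gamma> \<union> B3) H" by blast
    let ?B = "B1 \<union> B2 \<union> B3"
    have "nd True A (\<Gamma> \<union> ?B) (Or F G)" "nd True A (insert F \<Gamma> \<union> ?B) H" "nd True A (insert G \<Gamma> \<union> ?B) H"
      by (rule weak[OF _ _ B(3)] weak[OF _ _ B(6)] weak[OF _ _ B(9)]; use B in blast)+
    then show ?case using B by (intro HOL.exI[of _ ?B]) (auto intro: nd.orE)
  next
    case (impI F \<Gamma> G)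
    then show ?case by (auto intro: nd.impI)
  next
    case (impE \<Gamma> F G)
    then obtain B1 B2 where B: "B1 \<subseteq> B" "finite B1" "nd True A (\<Gamma> \<union> B1) (Imp F G)"
      "B2 \<subseteq> B" "finite B2" "nd True A (\<Gamma> \<union> B2) F" by blast
    have "nd True A (\<Gamma> \<union> (B1 \<union> B2)) (Imp F G)" "nd True A (\<Gamma> \<union> (B1 \<union> B2)) F"
      by (rule weak[OF _ _ B(3)] weak[OF _ _ B(6)]; use B in blast)+
    then show ?case using B by (intro HOL.exI[of _ "B1 \<union> B2"]) (auto intro: nd.impE)
  next
    case (allI \<Gamma> F x)
    then obtain B1 where B: "B1 \<subseteq> B" "finite B1" "nd True A (\<Gamma> \<union> B1) F" by blast
    have "nd True A (\<Gamma> \<union> B1) (All x F)" by (rule nd.allI[OF B(3) fresh[OF allI.hyps(2) B(1)]])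
    then show ?case using B by blast
  next
    case (exE \<Gamma> x F G)
    then obtain B1 B2 where B: "B1 \<subseteq> B" "finite B1" "nd True A (\<Gamma> \<union> B1) (Ex x F)"
      "B2 \<subseteq> B" "finite B2" "nd True A (insert F \<Gamma> \<union> B2) G" by blast
    have "nd True A (\<Gamma> \<union> (B1 \<union> B2)) (Ex x F)" "nd True A (insert F \<Gamma> \<union> (B1 \<union> B2)) G"
      by (rule weak[OF _ _ B(3)] weak[OF _ _ B(6)]; use B in blast)+
    then show ?case using B fresh[OF exE.hyps(4), of "B1 \<union> B2"]
      by (intro HOL.exI[of _ "B1 \<union> B2"]) (auto intro: nd.exE[OF _ _ exE.hyps(3)])
  next
    case (eqE \<Gamma> s t x F)
    then obtain B1 B2 where B: "B1 \<subseteq> B" "finite B1" "nd True A (\<Gamma> \<union> B1) (Cmp Eq s t)"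
      "B2 \<subseteq> B" "finite B2" "nd True A (\<Gamma> \<union> B2) (subst x s F)" by blast
    have "nd True A (\<Gamma> \<union> (B1 \<union> B2)) (Cmp Eq s t)" "nd True A (\<Gamma> \<union> (B1 \<union> B2)) (subst x s F)"
      by (rule weak[OF _ _ B(3)] weak[OF _ _ B(6)]; use B in blast)+
    then show ?case using B eqE.hyps(3-6)
      by (intro HOL.exI[of _ "B1 \<union> B2"]) (auto intro: nd.eqE)
  qed (blast intro: nd.intros)+
qed

lemma nd_cut_finite:
  "finite \<Delta> \<Longrightarrow> nd om Ax (\<Gamma> \<union> \<Delta>) F \<Longrightarrow> (\<And>A. A \<in> \<Delta> \<Longrightarrow> nd om Ax \<Gamma> A \<and> wf A) \<Longrightarrow> nd om Ax \<Gamma> F"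
proof (induction \<Delta> arbitrary: F rule: finite_induct)
  case (insert A \<Delta>)
  have "nd om Ax (\<Gamma> \<union> \<Delta>) (Imp A F)" using insert.prems by (auto intro: nd.impI)
  then have "nd om Ax \<Gamma> (Imp A F)" using insert by blast
  then show ?case using insert.prems(2) by (blast intro: nd.impE)
qed simp

theorem lemma8:
  assumes "sentence F" and "HT_sharp F"
  shows "HT_sharp2_omega_from D0 F"
proof -
  have "nd False (HTax \<union> Std \<union> Ind \<union> D0 \<union> D1) {} F"
    using assms(2) unfolding HT_sharp_def .
  moreover have "closed_set D1" using D1_closed by (simp add: closed_set_def)
  ultimately have "\<exists>B'\<subseteq>D1. finite B' \<and> ndD0 ({} \<union> B') F"
    by (intro nd_translate[where I = Ind] nd_Ind[OF Std_subset_Ax_D0]) (auto simp: Ax_D0_def)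
  then obtain B' where "B' \<subseteq> D1" "finite B'" "ndD0 B' F" by auto
  then have "ndD0 {} F"
    using nd_cut_finite[of B' True Ax_D0 "{}" F] D1_closed nd_D1 by auto
  then show ?thesis unfolding HT_sharp2_omega_from_def Ax_D0_def .
qed

end
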